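(* If an irreducible billiard-like interval exchange transformation $f$ of $I=[-1,1)$ satisfies the modified Keane condition, then $f$ is minimal, i.e. every orbit of $f$ is dense in $I$.
   Context: An interval exchange transformation of $I=[-1,1)$: a finite partition $\{I_\alpha\}_{\alpha\in\mathcal{A}}$ of $I$ into intervals closed on the left and open on the right ($|\mathcal{A}|\ge2$), and a bijection $f:I\to I$ whose restriction to each $I_\alpha$ is a translation; let $\pi_0:\mathcal{A}\to\{1,\dots,|\mathcal{A}|\}$ give the order of the intervals $I_\alpha$ in $I$ from left to right, and let $p_\alpha$ be the left endpoint of $I_\alpha$. $f$ is irreducible if for no $k<|\mathcal{A}|$ the union $I_{\pi_0^{-1}(1)}\cup\dots\cup I_{\pi_0^{-1}(k)}$ is invariant under $f$. $f$ is billiard-like if: each $I_\alpha$ is contained in $[-1,0)$ or in $[0,1)$; each $f(I_\alpha)$ is contained in $[-1,0)$ or in $[0,1)$; and each of $[-1,0)$, $[0,1)$ contains at least two intervals of the partition. A billiard-like $f$ satisfies the modified Keane condition if $f^m(p_\alpha)\ne p_\beta$ for all $m\ge1$, all $\alpha\in\mathcal{A}$, and all $\beta\in\mathcal{A}$ with $p_\beta\notin\{-1,0\}$. *)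

theory Defs
  imports "HOL-Analysis.Analysis"
begin

abbreviation IntI :: "real set" where "IntI \<equiv> {-1..<1}"

definition piece :: "('a \<Rightarrow> real) \<Rightarrow> ('a \<Rightarrow> real) \<Rightarrow> 'a \<Rightarrow> real set" where
  "piece p q \<alpha> = {p \<alpha>..<q \<alpha>}"

definition is_iet :: "(real \<Rightarrow> real) \<Rightarrow> ('a::finite \<Rightarrow> real) \<Rightarrow> ('a \<Rightarrow> real) \<Rightarrow> bool" where
  "is_iet f p q \<longleftrightarrow>
     CARD('a) \<ge> 2 \<and>
     (\<forall>\<alpha>. p \<alpha> < q \<alpha>) \<and>
     (\<forall>\<alpha> \<beta>. \<alpha> \<noteq> \<beta> \<longrightarrow> piece p q \<alpha> \<inter> piece p q \<beta> = {}) \<and>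
     (\<Union>\<alpha>. piece p q \<alpha>) = IntI \<and>
     bij_betw f IntI IntI \<and>
     (\<forall>\<alpha>. \<exists>t. \<forall>x\<in>piece p q \<alpha>. f x = x + t)"

text \<open>pi0: position (1..|A|) of the interval of alpha in I, from left to right.\<close>
definition pi0 :: "('a::finite \<Rightarrow> real) \<Rightarrow> 'a \<Rightarrow> nat" where
  "pi0 p \<alpha> = card {\<beta>. p \<beta> \<le> p \<alpha>}"

definition iet_irreducible :: "(real \<Rightarrow> real) \<Rightarrow> ('a::finite \<Rightarrow> real) \<Rightarrow> ('a \<Rightarrow> real) \<Rightarrow> bool" where
  "iet_irreducible f p q \<longleftrightarrow>
     (\<forall>k. 1 \<le> k \<and> k < CARD('a) \<longrightarrow>
        \<not> (f ` (\<Union>\<alpha>\<in>{\<alpha>. pi0 p \<alpha> \<le> k}. piece p q \<alpha>)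
             \<subseteq> (\<Union>\<alpha>\<in>{\<alpha>. pi0 p \<alpha> \<le> k}. piece p q \<alpha>)))"

definition billiard_like :: "(real \<Rightarrow> real) \<Rightarrow> ('a::finite \<Rightarrow> real) \<Rightarrow> ('a \<Rightarrow> real) \<Rightarrow> bool" where
  "billiard_like f p q \<longleftrightarrow>
     (\<forall>\<alpha>. piece p q \<alpha> \<subseteq> {-1..<0} \<or> piece p q \<alpha> \<subseteq> {0..<1}) \<and>
     (\<forall>\<alpha>. f ` piece p q \<alpha> \<subseteq> {-1..<0} \<or> f ` piece p q \<alpha> \<subseteq> {0..<1}) \<and>
     card {\<alpha>. piece p q \<alpha> \<subseteq> {-1..<0}} \<ge> 2 \<and>
     card {\<alpha>. piece p q \<alpha> \<subseteq> {0..<1}} \<ge> 2"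

definition modified_keane :: "(real \<Rightarrow> real) \<Rightarrow> ('a::finite \<Rightarrow> real) \<Rightarrow> bool" where
  "modified_keane f p \<longleftrightarrow>
     (\<forall>m::nat. \<forall>\<alpha> \<beta>. m \<ge> 1 \<and> p \<beta> \<notin> {-1, 0} \<longrightarrow> (f ^^ m) (p \<alpha>) \<noteq> p \<beta>)"

definition minimal_on_I :: "(real \<Rightarrow> real) \<Rightarrow> bool" where
  "minimal_on_I f \<longleftrightarrow> (\<forall>x\<in>IntI. IntI \<subseteq> closure {(f ^^ n) x | n::nat. True})"

end

theory Submission
  imports Defs
begin

text \<open>Minimality means that every orbit enters every interval \<open>[c, d)\<close>. The set \<open>W\<close> of points
  whose orbit enters \<open>[c, d)\<close> is invariant and contains \<open>c\<close>.

  Both \<open>f\<close> and its inverse are injective self-maps of \<open>[-1, 1)\<close> that are translations near all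
  but finitely many points. For such maps every point of \<open>[c, d)\<close> returns to \<open>[c, d)\<close>, and the
  first return map is a translation on each of finitely many subintervals; pushing these forward
  until they return shows that \<open>W\<close> is a finite union of half-open intervals.

  Hence only finitely many points are jumps of membership in \<open>W\<close> from the left, and \<open>f\<close> and its
  inverse carry jumps to jumps away from the left endpoints of the pieces. The modified Keane
  condition excludes periodic points, so each jump lies on an orbit running from a left endpoint to
  a left endpoint, and the Keane condition then forces the jump to be \<open>0\<close>. So \<open>W\<close> is a union of
  the halves \<open>[-1, 0)\<close> and \<open>[0, 1)\<close>; irreducibility forbids \<open>f\<close> to map \<open>[-1, 0)\<close> into itself, so
  \<open>W = [-1, 1)\<close>.\<close>

section \<open>Local translations\<close>

definition right_translation_at :: "(real \<Rightarrow> real) \<Rightarrow> real \<Rightarrow> bool" where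
  "right_translation_at g y \<longleftrightarrow>
     (\<exists>\<delta>>0. \<forall>z. y \<le> z \<and> z < y + \<delta> \<longrightarrow> z \<in> IntI \<and> g z = z + (g y - y))"

definition translation_at :: "(real \<Rightarrow> real) \<Rightarrow> real \<Rightarrow> bool" where
  "translation_at g y \<longleftrightarrow>
     (\<exists>\<delta>>0. \<forall>z. y - \<delta> < z \<and> z < y + \<delta> \<longrightarrow> z \<in> IntI \<and> g z = z + (g y - y))"

definition translation_on :: "(real \<Rightarrow> real) \<Rightarrow> real set \<Rightarrow> bool" where
  "translation_on f S \<longleftrightarrow> (\<exists>s. \<forall>z\<in>S. f z = z + s)"

lemma translation_onD:
  assumes "translation_on f S" "x \<in> S" "z \<in> S"
  shows "f z = z + (f x - x)"
  using assms unfolding translation_on_def by force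

lemma right_translation_atE:
  assumes "right_translation_at g y"
  obtains \<delta> where "\<delta> > 0" "\<And>z. y \<le> z \<Longrightarrow> z < y + \<delta> \<Longrightarrow> z \<in> IntI \<and> g z = z + (g y - y)"
  using assms unfolding right_translation_at_def by blast

lemma translation_atE:
  assumes "translation_at g y"
  obtains \<delta> where "\<delta> > 0" "\<And>z. y - \<delta> < z \<Longrightarrow> z < y + \<delta> \<Longrightarrow> z \<in> IntI \<and> g z = z + (g y - y)"
  using assms unfolding translation_at_def by blast

lemma right_translation_atI:
  assumes "\<delta> > 0" "\<And>z. y \<le> z \<Longrightarrow> z < y + \<delta> \<Longrightarrow> z \<in> IntI \<and> g z = z + (g y - y)"
  shows "right_translation_at g y"
  using assms unfolding right_translation_at_def by blast

lemma translation_atI: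
  assumes "\<delta> > 0" "\<And>z. y - \<delta> < z \<Longrightarrow> z < y + \<delta> \<Longrightarrow> z \<in> IntI \<and> g z = z + (g y - y)"
  shows "translation_at g y"
  using assms unfolding translation_at_def by blast

lemma right_translation_at_comp:
  assumes "right_translation_at h y" "right_translation_at g (h y)"
  shows "right_translation_at (g \<circ> h) y"
proof -
  obtain d1 where d1: "d1 > 0" "\<And>z. y \<le> z \<Longrightarrow> z < y + d1 \<Longrightarrow> z \<in> IntI \<and> h z = z + (h y - y)"
    using right_translation_atE[OF assms(1)] by blast
  obtain d2 where d2: "d2 > 0"
    "\<And>z. h y \<le> z \<Longrightarrow> z < h y + d2 \<Longrightarrow> z \<in> IntI \<and> g z = z + (g (h y) - h y)"
    using right_translation_atE[OF assms(2)] by blast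
  show ?thesis
  proof (rule right_translation_atI[of "min d1 d2"])
    fix z assume z: "y \<le> z" "z < y + min d1 d2"
    then have hz: "z \<in> IntI \<and> h z = z + (h y - y)" using d1(2)[of z] by simp
    then have "g (h z) = h z + (g (h y) - h y)" using d2(2)[of "h z"] z by simp
    then show "z \<in> IntI \<and> (g \<circ> h) z = z + ((g \<circ> h) y - y)" using hz by simp
  qed (use d1(1) d2(1) in simp)
qed

lemma translation_at_comp:
  assumes "translation_at h y" "translation_at g (h y)"
  shows "translation_at (g \<circ> h) y"
proof -
  obtain d1 where d1: "d1 > 0"
    "\<And>z. y - d1 < z \<Longrightarrow> z < y + d1 \<Longrightarrow> z \<in> IntI \<and> h z = z + (h y - y)"
    using translation_atE[OF assms(1)] by blast
  obtain d2 where d2: "d2 > 0"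
    "\<And>z. h y - d2 < z \<Longrightarrow> z < h y + d2 \<Longrightarrow> z \<in> IntI \<and> g z = z + (g (h y) - h y)"
    using translation_atE[OF assms(2)] by blast
  show ?thesis
  proof (rule translation_atI[of "min d1 d2"])
    fix z assume z: "y - min d1 d2 < z" "z < y + min d1 d2"
    then have hz: "z \<in> IntI \<and> h z = z + (h y - y)" using d1(2)[of z] by simp
    then have "g (h z) = h z + (g (h y) - h y)" using d2(2)[of "h z"] z by simp
    then show "z \<in> IntI \<and> (g \<circ> h) z = z + ((g \<circ> h) y - y)" using hz by simp
  qed (use d1(1) d2(1) in simp)
qed

section \<open>Finite unions of half-open intervals\<close>

lemma Ico_Union_right_constant:
  fixes F :: "(real \<times> real) set"
  assumes "finite F"
  obtains \<epsilon> where "\<epsilon> > 0"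
    "\<And>z. y \<le> z \<Longrightarrow> z < y + \<epsilon> \<Longrightarrow> z \<in> (\<Union>(s, t)\<in>F. {s..<t}) \<longleftrightarrow> y \<in> (\<Union>(s, t)\<in>F. {s..<t})"
proof -
  define gap where "gap = (\<lambda>(s, t). if y < s then s - y else if y < t then t - y else 1 :: real)"
  define \<epsilon> where "\<epsilon> = Min (insert 1 (gap ` F))"
  have "\<epsilon> > 0" unfolding \<epsilon>_def gap_def using assms by (auto simp: Min_gr_iff split: if_splits)
  moreover have "z \<in> {s..<t} \<longleftrightarrow> y \<in> {s..<t}" if "(s, t) \<in> F" "y \<le> z" "z < y + \<epsilon>" for s t z
  proof -
    have "\<epsilon> \<le> gap (s, t)" unfolding \<epsilon>_def using assms that(1) by (intro Min_le) auto
    then show ?thesis using that(2,3) unfolding gap_def by (auto split: if_splits)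
  qed
  ultimately show thesis by (intro that[of \<epsilon>]) blast+
qed

lemma Ico_Union_left_constant:
  fixes F :: "(real \<times> real) set"
  assumes "finite F" "y \<notin> fst ` F \<union> snd ` F"
  obtains \<epsilon> where "\<epsilon> > 0"
    "\<And>z. y - \<epsilon> < z \<Longrightarrow> z < y \<Longrightarrow> z \<in> (\<Union>(s, t)\<in>F. {s..<t}) \<longleftrightarrow> y \<in> (\<Union>(s, t)\<in>F. {s..<t})"
proof -
  define gap where "gap = (\<lambda>(s, t). if y < s then 1 else if y < t then y - s else y - t :: real)"
  define \<epsilon> where "\<epsilon> = Min (insert 1 (gap ` F))"
  have "gap (s, t) > 0" if "(s, t) \<in> F" for s t
    using assms(2) that unfolding gap_def by (force split: if_splits)
  then have "\<epsilon> > 0" unfolding \<epsilon>_def using assms(1) by (auto simp: Min_gr_iff)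
  moreover have "z \<in> {s..<t} \<longleftrightarrow> y \<in> {s..<t}" if "(s, t) \<in> F" "y - \<epsilon> < z" "z < y" for s t z
  proof -
    have "\<epsilon> \<le> gap (s, t)" unfolding \<epsilon>_def using assms(1) that(1) by (intro Min_le) auto
    moreover have "y \<noteq> s" "y \<noteq> t" using assms(2) that(1) by force+
    ultimately show ?thesis using that(2,3) unfolding gap_def by (auto split: if_splits)
  qed
  ultimately show thesis by (intro that[of \<epsilon>]) blast+
qed

definition left_jump :: "real set \<Rightarrow> real \<Rightarrow> bool" where
  "left_jump W y \<longleftrightarrow> (\<exists>\<epsilon>>0. \<forall>z. y - \<epsilon> < z \<and> z < y \<longrightarrow> (z \<in> W \<longleftrightarrow> y \<notin> W))"

lemma left_jumps_Ico_Union: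
  fixes F :: "(real \<times> real) set"
  assumes "finite F"
  shows "{y. left_jump (\<Union>(s, t)\<in>F. {s..<t}) y} \<subseteq> fst ` F \<union> snd ` F"
proof
  fix y assume "y \<in> {y. left_jump (\<Union>(s, t)\<in>F. {s..<t}) y}"
  then obtain \<epsilon> where \<epsilon>: "\<epsilon> > 0"
      "\<And>z. y - \<epsilon> < z \<Longrightarrow> z < y \<Longrightarrow> z \<in> (\<Union>(s, t)\<in>F. {s..<t}) \<longleftrightarrow> y \<notin> (\<Union>(s, t)\<in>F. {s..<t})"
    unfolding left_jump_def by blast
  show "y \<in> fst ` F \<union> snd ` F"
  proof (rule ccontr)
    assume "y \<notin> fst ` F \<union> snd ` F"
    then obtain \<epsilon>' where \<epsilon>': "\<epsilon>' > 0" "\<And>z. y - \<epsilon>' < z \<Longrightarrow> z < y \<Longrightarrow>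
        z \<in> (\<Union>(s, t)\<in>F. {s..<t}) \<longleftrightarrow> y \<in> (\<Union>(s, t)\<in>F. {s..<t})"
      using Ico_Union_left_constant[OF assms] by blast
    define z where "z = y - min \<epsilon> \<epsilon>' / 2"
    have "y - \<epsilon> < z" "y - \<epsilon>' < z" "z < y" using \<epsilon>(1) \<epsilon>'(1) unfolding z_def by auto
    then show False using \<epsilon>(2)[of z] \<epsilon>'(2)[of z] by blast
  qed
qed

text \<open>The infimum of the points of \<open>[y1, y2]\<close> whose membership differs from that of \<open>y1\<close> is a
  left jump.\<close>

lemma left_jump_between:
  fixes T :: "real set"
  assumes right_constant:
      "\<And>y. \<exists>\<epsilon>>0. \<forall>z. y \<le> z \<and> z < y + \<epsilon> \<longrightarrow> (z \<in> T \<longleftrightarrow> y \<in> T)"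
    and less: "y1 < y2" and differ: "\<not> (y1 \<in> T \<longleftrightarrow> y2 \<in> T)"
  obtains b where "y1 < b" "b \<le> y2" "left_jump T b"
proof -
  define X where "X = {s \<in> {y1..y2}. \<not> (s \<in> T \<longleftrightarrow> y1 \<in> T)}"
  define b where "b = Inf X"
  have "y2 \<in> X" using differ less unfolding X_def by auto
  have bdd: "bdd_below X" unfolding X_def by (auto intro: bdd_belowI[of _ y1])
  have below: "\<not> (z \<in> T \<longleftrightarrow> y1 \<in> T) \<Longrightarrow> z \<in> {y1..y2} \<Longrightarrow> b \<le> z" for z
    unfolding b_def using bdd by (intro cInf_lower) (auto simp: X_def)
  have le_b: "s \<le> b" if "\<And>z. y1 \<le> z \<Longrightarrow> z < s \<Longrightarrow> (z \<in> T \<longleftrightarrow> y1 \<in> T)" for s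
    unfolding b_def
  proof (rule cInf_greatest)
    fix x assume "x \<in> X"
    then have "y1 \<le> x" "\<not> (x \<in> T \<longleftrightarrow> y1 \<in> T)" unfolding X_def by auto
    then show "s \<le> x" using that[of x] by (meson not_le)
  qed (use \<open>y2 \<in> X\<close> in blast)
  obtain \<epsilon> where \<epsilon>: "\<epsilon> > 0" "\<And>z. y1 \<le> z \<Longrightarrow> z < y1 + \<epsilon> \<Longrightarrow> (z \<in> T \<longleftrightarrow> y1 \<in> T)"
    using right_constant[of y1] by blast
  have "y1 + \<epsilon> \<le> b" by (rule le_b[OF \<epsilon>(2)])
  have "b \<le> y2" using \<open>y2 \<in> X\<close> unfolding X_def by (intro below) auto
  have before_b: "z \<in> T \<longleftrightarrow> y1 \<in> T" if "y1 \<le> z" "z < b" for z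
  proof (rule ccontr)
    assume "\<not> (z \<in> T \<longleftrightarrow> y1 \<in> T)"
    then have "b \<le> z" using that \<open>b \<le> y2\<close> by (intro below) auto
    then show False using that(2) by simp
  qed
  have "\<not> (b \<in> T \<longleftrightarrow> y1 \<in> T)"
  proof
    assume same: "b \<in> T \<longleftrightarrow> y1 \<in> T"
    obtain \<epsilon>' where \<epsilon>': "\<epsilon>' > 0" "\<And>z. b \<le> z \<Longrightarrow> z < b + \<epsilon>' \<Longrightarrow> (z \<in> T \<longleftrightarrow> b \<in> T)"
      using right_constant[of b] by blast
    have "b + \<epsilon>' \<le> b"
    proof (rule le_b)
      fix z assume "y1 \<le> z" "z < b + \<epsilon>'"
      then show "z \<in> T \<longleftrightarrow> y1 \<in> T"
        using before_b[of z] \<epsilon>'(2)[of z] same by (cases "z < b") auto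
    qed
    then show False using \<open>\<epsilon>' > 0\<close> by simp
  qed
  then have "z \<in> T \<longleftrightarrow> b \<notin> T" if "b - (b - y1) < z" "z < b" for z
    using before_b[of z] that by auto
  moreover have "b - y1 > 0" using \<open>y1 + \<epsilon> \<le> b\<close> \<open>\<epsilon> > 0\<close> by simp
  ultimately have "left_jump T b" unfolding left_jump_def by blast
  moreover have "y1 < b" using \<open>y1 + \<epsilon> \<le> b\<close> \<open>\<epsilon> > 0\<close> by simp
  ultimately show thesis using that \<open>b \<le> y2\<close> by blast
qed

lemma membership_constant_without_left_jumps:
  fixes T :: "real set"
  assumes right_constant:
      "\<And>y. \<exists>\<epsilon>>0. \<forall>z. y \<le> z \<and> z < y + \<epsilon> \<longrightarrow> (z \<in> T \<longleftrightarrow> y \<in> T)"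
    and no_jump: "\<And>y. lo < y \<Longrightarrow> y < hi \<Longrightarrow> \<not> left_jump T y"
    and "y1 \<in> {lo..<hi}" "y2 \<in> {lo..<hi}"
  shows "y1 \<in> T \<longleftrightarrow> y2 \<in> T"
proof -
  have less: "y1 \<in> T \<longleftrightarrow> y2 \<in> T"
    if range: "y1 \<in> {lo..<hi}" "y2 \<in> {lo..<hi}" and "y1 < y2" for y1 y2
  proof (rule ccontr)
    assume "\<not> (y1 \<in> T \<longleftrightarrow> y2 \<in> T)"
    then obtain b where "y1 < b" "b \<le> y2" "left_jump T b"
      using left_jump_between[OF right_constant \<open>y1 < y2\<close>] by blast
    then show False using no_jump[of b] range by auto
  qed
  show ?thesis
    using less[of y1 y2] less[of y2 y1] assms(3,4) by (cases y1 y2 rule: linorder_cases) auto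
qed

section \<open>Injective piecewise translations of \<open>[-1, 1)\<close>\<close>

lemma compact_sequence_close_pair:
  fixes a :: "nat \<Rightarrow> 'm::metric_space"
  assumes "compact S" "\<And>n. a n \<in> S" "0 < \<delta>"
  obtains i j where "i < j" "dist (a i) (a j) < \<delta>"
proof -
  obtain l r where r: "strict_mono r" "(a \<circ> r) \<longlonglongrightarrow> l"
    using compact_imp_seq_compact[OF assms(1)] assms(2) unfolding seq_compact_def by metis
  then have "Cauchy (a \<circ> r)" by (simp add: LIMSEQ_imp_Cauchy)
  then obtain M where "\<forall>m\<ge>M. \<forall>n\<ge>M. dist ((a \<circ> r) m) ((a \<circ> r) n) < \<delta>"
    using assms(3) unfolding Cauchy_def by blast
  then show thesis
    using that[of "r M" "r (Suc M)"] r(1) by (simp add: strict_mono_def)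
qed

lemma finite_left_neighbour:
  fixes A :: "real set"
  assumes "finite A" "c \<in> A" "c \<le> v"
  obtains a where "a \<in> A" "a \<le> v" "\<And>x. x \<in> A \<Longrightarrow> a < x \<Longrightarrow> v < x"
proof -
  define a where "a = Max {x \<in> A. x \<le> v}"
  have "finite {x \<in> A. x \<le> v}" "c \<in> {x \<in> A. x \<le> v}" using assms by auto
  then have "a \<in> {x \<in> A. x \<le> v}" unfolding a_def by (intro Max_in) auto
  moreover have "x \<le> a" if "x \<in> A" "x \<le> v" for x
    unfolding a_def using \<open>finite {x \<in> A. x \<le> v}\<close> that by (intro Max_ge) auto
  ultimately show thesis using that[of a] by force
qed

text \<open>Since the neighbourhoods in \<open>translation_at\<close> must lie in \<open>[-1, 1)\<close>, the point \<open>-1\<close> is always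
  a break.\<close>

locale piecewise_translation =
  fixes g :: "real \<Rightarrow> real" and B :: "real set"
  assumes finite_breaks: "finite B" and minus_one_break: "-1 \<in> B"
    and inj: "inj_on g IntI" and maps_into: "\<And>y. y \<in> IntI \<Longrightarrow> g y \<in> IntI"
    and right_translation: "\<And>y. y \<in> IntI \<Longrightarrow> right_translation_at g y"
    and translation_off_breaks: "\<And>y. y \<in> IntI \<Longrightarrow> y \<notin> B \<Longrightarrow> translation_at g y"
begin

lemma funpow_maps_into:
  assumes "y \<in> IntI"
  shows "(g^^n) y \<in> IntI"
proof (induction n)
  case (Suc n)
  show ?case by (simp only: funpow.simps comp_apply) (rule maps_into[OF Suc.IH])
qed (use assms in simp)

lemma inj_on_funpow: "inj_on (g^^n) IntI"
proof (induction n)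
  case (Suc n)
  have "inj_on g ((g^^n) ` IntI)"
    using inj funpow_maps_into by (meson image_subset_iff inj_on_subset)
  then have "inj_on (g \<circ> g^^n) IntI" by (rule comp_inj_on[OF Suc.IH])
  then show ?case by (simp add: o_def)
qed simp

lemma funpow_eqD: "x \<in> IntI \<Longrightarrow> y \<in> IntI \<Longrightarrow> (g^^n) x = (g^^n) y \<Longrightarrow> x = y"
  by (rule inj_onD[OF inj_on_funpow])

lemma right_translation_funpow: "y \<in> IntI \<Longrightarrow> right_translation_at (g^^n) y"
proof (induction n)
  case 0
  show ?case
  proof (rule right_translation_atI[of "1 - y"])
    fix z assume "y \<le> z" "z < y + (1 - y)"
    then show "z \<in> IntI \<and> (g^^0) z = z + ((g^^0) y - y)" using "0" by simp
  qed (use "0" in simp)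
next
  case (Suc n)
  have "right_translation_at (g \<circ> g^^n) y"
    by (rule right_translation_at_comp[OF Suc.IH[OF Suc.prems]
          right_translation[OF funpow_maps_into[OF Suc.prems]]])
  then show ?case by (simp only: funpow.simps)
qed

lemma translation_funpow:
  assumes "y \<in> IntI" "y \<notin> B" "\<forall>j<n. (g^^j) y \<notin> B"
  shows "translation_at (g^^n) y"
  using assms(3)
proof (induction n)
  case 0
  have "y \<noteq> -1" using assms(2) minus_one_break by auto
  then have "-1 < y" "y < 1" using assms(1) by auto
  then show ?case
  proof (intro translation_atI[of "min (y + 1) (1 - y)"])
    fix z assume "y - min (y + 1) (1 - y) < z" "z < y + min (y + 1) (1 - y)"
    then show "z \<in> IntI \<and> (g^^0) z = z + ((g^^0) y - y)"
      by (simp add: min_def split: if_splits)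
  qed simp
next
  case (Suc n)
  have "translation_at (g \<circ> g^^n) y"
    using Suc by (intro translation_at_comp translation_off_breaks funpow_maps_into assms(1)) auto
  then show ?case by (simp only: funpow.simps)
qed

lemma translation_on_break_free_interval:
  assumes "u \<in> IntI" "u + \<delta> \<le> 1" "B \<inter> {u<..<u + \<delta>} = {}" "z \<in> {u..<u + \<delta>}"
  shows "g z = z + (g u - u)"
proof -
  let ?A = "{u..<u + \<delta>}"
  have "g u - u = g z - z"
  proof (rule connected_local_const[of ?A u z "\<lambda>x. g x - x"])
    show "u \<in> ?A" using assms(4) by simp
    show "\<forall>a\<in>?A. \<forall>\<^sub>F b in at a within ?A. g a - a = g b - b"
    proof
      fix a assume a: "a \<in> ?A"
      then have aI: "a \<in> IntI" using assms(1,2) by auto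
      show "\<forall>\<^sub>F b in at a within ?A. g a - a = g b - b"
      proof (cases "a = u")
        case True
        obtain e where e: "e > 0" "\<And>z. a \<le> z \<Longrightarrow> z < a + e \<Longrightarrow> z \<in> IntI \<and> g z = z + (g a - a)"
          using right_translation_atE[OF right_translation[OF aI]] by blast
        have "\<forall>b\<in>?A. b \<noteq> a \<and> dist b a < e \<longrightarrow> g a - a = g b - b"
        proof (intro ballI impI)
          fix b assume "b \<in> ?A" "b \<noteq> a \<and> dist b a < e"
          then have "a \<le> b" "b < a + e" using True by (auto simp: dist_real_def)
          then show "g a - a = g b - b" using e(2)[of b] by simp
        qed
        then show ?thesis unfolding eventually_at using \<open>e > 0\<close> by blast
      next
        case False
        then have "a \<notin> B" using a assms(3) by auto
        then obtain e where e: "e > 0" "\<And>z. a - e < z \<Longrightarrow> z < a + e \<Longrightarrow> z \<in> IntI \<and> g z = z + (g a - a)"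
          using translation_atE[OF translation_off_breaks[OF aI]] by blast
        have "\<forall>b\<in>?A. b \<noteq> a \<and> dist b a < e \<longrightarrow> g a - a = g b - b"
        proof (intro ballI impI)
          fix b assume "b \<noteq> a \<and> dist b a < e"
          then have "a - e < b" "b < a + e" by (auto simp: dist_real_def)
          then show "g a - a = g b - b" using e(2)[of b] by simp
        qed
        then show ?thesis unfolding eventually_at using \<open>e > 0\<close> by blast
      qed
    qed
  qed (use assms(4) in auto)
  then show ?thesis by simp
qed

text \<open>The points of \<open>[c, d)\<close> whose orbit meets a break point or an endpoint of \<open>[c, d)\<close>
  before returning to \<open>[c, d)\<close>; between two consecutive ones, the first return map to
  \<open>[c, d)\<close> is a single translation.\<close>

definition return_breaks :: "real \<Rightarrow> real \<Rightarrow> real set" where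
  "return_breaks c d = {z \<in> {c..<d}. \<exists>k. (g^^k) z \<in> B \<union> {c, d} \<and> (\<forall>j\<in>{1..<k}. (g^^j) z \<notin> {c..<d})}"

lemma first_visit_unique:
  assumes "{c..<d} \<subseteq> IntI" "x \<in> {c..<d}" "y \<in> {c..<d}" "1 \<le> k" "1 \<le> k'"
    and "(g^^k) x = (g^^k') y"
    and "\<forall>j\<in>{1..<k}. (g^^j) x \<notin> {c..<d}" "\<forall>j\<in>{1..<k'}. (g^^j) y \<notin> {c..<d}"
  shows "x = y"
proof -
  have earlier: "x = y"
    if "x \<in> {c..<d}" "y \<in> {c..<d}" "1 \<le> k" "k \<le> k'" "(g^^k) x = (g^^k') y"
      "\<forall>j\<in>{1..<k'}. (g^^j) y \<notin> {c..<d}" for x y k k'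
  proof -
    have xI: "x \<in> IntI" and yI: "y \<in> IntI" using that(1,2) assms(1) by auto
    have "(g^^k) ((g^^(k' - k)) y) = (g^^(k + (k' - k))) y" by (simp add: funpow_add)
    then have "(g^^k) x = (g^^k) ((g^^(k' - k)) y)" using that(4,5) by simp
    then have x_eq: "x = (g^^(k' - k)) y" by (rule funpow_eqD[OF xI funpow_maps_into[OF yI]])
    show "x = y"
    proof (cases "k = k'")
      case False
      with that(3,4) have "k' - k \<in> {1..<k'}" by auto
      then show ?thesis using that(1,6) x_eq by auto
    qed (use x_eq in simp)
  qed
  show ?thesis
  proof (cases "k \<le> k'")
    case True
    then show ?thesis using earlier[of x y k k'] assms by blast
  next
    case False
    then show ?thesis using earlier[of y x k' k] assms by fastforce
  qed
qed

lemma finite_return_breaks: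
  assumes "-1 \<le> c" "d \<le> 1"
  shows "finite (return_breaks c d)"
proof -
  define S where "S e = {z \<in> {c..<d}. \<exists>k\<ge>1. (g^^k) z = e \<and> (\<forall>j\<in>{1..<k}. (g^^j) z \<notin> {c..<d})}"
    for e
  have "S e \<subseteq> {SOME z. z \<in> S e}" for e
  proof
    fix z assume z: "z \<in> S e"
    define z' where "z' = (SOME z. z \<in> S e)"
    have "z' \<in> S e" using z unfolding z'_def by (rule someI)
    then obtain k' where z': "z' \<in> {c..<d}" "1 \<le> k'" "(g^^k') z' = e"
        "\<forall>j\<in>{1..<k'}. (g^^j) z' \<notin> {c..<d}"
      unfolding S_def by blast
    obtain k where "z \<in> {c..<d}" "1 \<le> k" "(g^^k) z = e"
        "\<forall>j\<in>{1..<k}. (g^^j) z \<notin> {c..<d}"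
      using z unfolding S_def by blast
    moreover have "{c..<d} \<subseteq> IntI" using assms by auto
    ultimately have "z = z'"
      using z' by (intro first_visit_unique[of c d z z' k k']) simp_all
    then show "z \<in> {SOME z. z \<in> S e}" unfolding z'_def by simp
  qed
  then have "finite (S e)" for e by (rule finite_subset) simp
  moreover have "return_breaks c d \<subseteq> (B \<union> {c, d}) \<union> (\<Union>e\<in>B \<union> {c, d}. S e)"
  proof
    fix z assume "z \<in> return_breaks c d"
    then obtain k where k: "z \<in> {c..<d}" "(g^^k) z \<in> B \<union> {c, d}"
        "\<forall>j\<in>{1..<k}. (g^^j) z \<notin> {c..<d}"
      unfolding return_breaks_def by blast
    show "z \<in> (B \<union> {c, d}) \<union> (\<Union>e\<in>B \<union> {c, d}. S e)"
    proof (cases "k = 0")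
      case False
      then have "1 \<le> k" by simp
      then have "z \<in> S ((g^^k) z)" using k(1,3) unfolding S_def by blast
      then show ?thesis using k(2) by blast
    qed (use k in auto)
  qed
  ultimately show ?thesis using finite_breaks by (auto intro: finite_subset)
qed

context
  fixes c d y \<delta> :: real
  assumes bounds: "-1 \<le> c" "c \<le> y" "0 < \<delta>" "y + \<delta> \<le> d" "d \<le> 1"
    and no_return_break: "return_breaks c d \<inter> {y<..<y + \<delta>} = {}"
begin

lemma return_breakI:
  assumes "z \<in> {y<..<y + \<delta>}" "(g^^k) z \<in> B \<union> {c, d}"
    and "\<forall>j\<in>{1..<k}. (g^^j) z \<notin> {c..<d}"
  shows False
proof -
  have "z \<in> {c..<d}" using assms(1) bounds by auto
  then have "z \<in> return_breaks c d" using assms(2,3) unfolding return_breaks_def by blast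
  then show False using assms(1) no_return_break by blast
qed

lemma translation_step:
  assumes translates: "translation_on (g^^k) {y..<y + \<delta>}"
    and avoids: "\<forall>j\<in>{1..k}. \<forall>z\<in>{y..<y + \<delta>}. (g^^j) z \<notin> {c..<d}"
  shows "translation_on (g^^Suc k) {y..<y + \<delta>}"
proof -
  obtain s where s: "\<And>z. z \<in> {y..<y + \<delta>} \<Longrightarrow> (g^^k) z = z + s"
    using translates unfolding translation_on_def by blast
  have image: "z + s \<in> IntI" if "z \<in> {y..<y + \<delta>}" for z
    using funpow_maps_into[of z k] s[OF that] that bounds by auto
  define u where "u = y + s"
  have "u \<in> IntI" using image[of y] bounds unfolding u_def by simp
  moreover have "u + \<delta> \<le> 1"
  proof (rule ccontr)
    assume "\<not> u + \<delta> \<le> 1"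
    then show False using image[of "y + (1 - u)"] \<open>u \<in> IntI\<close> unfolding u_def by auto
  qed
  moreover have "B \<inter> {u<..<u + \<delta>} = {}"
  proof (rule ccontr)
    assume "B \<inter> {u<..<u + \<delta>} \<noteq> {}"
    then obtain e where "e \<in> B" "e \<in> {u<..<u + \<delta>}" by blast
    moreover have "(g^^k) (y + (e - u)) = e"
      using s[of "y + (e - u)"] \<open>e \<in> {u<..<u + \<delta>}\<close> unfolding u_def by auto
    ultimately show False
      using return_breakI[of "y + (e - u)" k] avoids unfolding u_def by auto
  qed
  ultimately have "g (z + s) = z + s + (g u - u)" if "z \<in> {y..<y + \<delta>}" for z
    using that unfolding u_def by (intro translation_on_break_free_interval) auto
  then show ?thesis
    unfolding translation_on_def using s by (intro exI[of _ "s + (g u - u)"]) simp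
qed

lemma avoidance_step:
  assumes translates: "translation_on (g^^k) {y..<y + \<delta>}"
    and avoids: "\<forall>j\<in>{1..<k}. \<forall>z\<in>{y..<y + \<delta>}. (g^^j) z \<notin> {c..<d}"
    and outside: "(g^^k) y \<notin> {c..<d}"
  shows "\<forall>z\<in>{y..<y + \<delta>}. (g^^k) z \<notin> {c..<d}"
proof (intro ballI notI)
  fix z assume z: "z \<in> {y..<y + \<delta>}" and inside: "(g^^k) z \<in> {c..<d}"
  obtain s where s: "\<And>z. z \<in> {y..<y + \<delta>} \<Longrightarrow> (g^^k) z = z + s"
    using translates unfolding translation_on_def by blast
  have "y + s < c" using outside inside s[of y] s[OF z] z bounds by auto
  then have "(g^^k) (c - s) = c" using s[of "c - s"] inside s[OF z] z by auto
  then show False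
    using return_breakI[of "c - s" k] avoids inside s[OF z] z \<open>y + s < c\<close> by auto
qed

lemma return_inside:
  assumes translates: "translation_on (g^^k) {y..<y + \<delta>}"
    and avoids: "\<forall>j\<in>{1..<k}. \<forall>z\<in>{y..<y + \<delta>}. (g^^j) z \<notin> {c..<d}"
    and inside: "(g^^k) y \<in> {c..<d}"
  shows "(g^^k) ` {y..<y + \<delta>} \<subseteq> {c..<d}"
proof
  fix w assume "w \<in> (g^^k) ` {y..<y + \<delta>}"
  then obtain z where z: "z \<in> {y..<y + \<delta>}" "w = (g^^k) z" by blast
  obtain s where s: "\<And>z. z \<in> {y..<y + \<delta>} \<Longrightarrow> (g^^k) z = z + s"
    using translates unfolding translation_on_def by blast
  have "y + \<delta> + s \<le> d"
  proof (rule ccontr)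
    assume "\<not> y + \<delta> + s \<le> d"
    then have "d - s \<in> {y<..<y + \<delta>}" using s[of y] inside bounds by auto
    then show False
      using return_breakI[of "d - s" k] avoids s[of "d - s"] by auto
  qed
  then show "w \<in> {c..<d}" using z s[OF z(1)] s[of y] inside bounds by auto
qed

lemma cell_translated_before_return:
  assumes "\<forall>j\<in>{1..k}. (g^^j) y \<notin> {c..<d}"
  shows "translation_on (g^^k) {y..<y + \<delta>} \<and>
    (\<forall>j\<in>{1..k}. \<forall>z\<in>{y..<y + \<delta>}. (g^^j) z \<notin> {c..<d})"
  using assms
proof (induction k)
  case 0
  show ?case unfolding translation_on_def by (auto intro: exI[of _ 0])
next
  case (Suc k)
  then have IH: "translation_on (g^^k) {y..<y + \<delta>}"
      "\<forall>j\<in>{1..k}. \<forall>z\<in>{y..<y + \<delta>}. (g^^j) z \<notin> {c..<d}"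
    by auto
  have translates: "translation_on (g^^Suc k) {y..<y + \<delta>}"
    using translation_step[OF IH] .
  moreover have "\<forall>z\<in>{y..<y + \<delta>}. (g^^Suc k) z \<notin> {c..<d}"
  proof (rule avoidance_step[OF translates])
    show "\<forall>j\<in>{1..<Suc k}. \<forall>z\<in>{y..<y + \<delta>}. (g^^j) z \<notin> {c..<d}"
      using IH(2) by (simp add: atLeastLessThanSuc_atLeastAtMost)
    have "Suc k \<in> {1..Suc k}" by simp
    then show "(g^^Suc k) y \<notin> {c..<d}" using Suc.prems by blast
  qed
  ultimately show ?case using IH(2) by (auto simp: le_Suc_eq simp del: funpow.simps)
qed

lemma cell_returns:
  assumes "1 \<le> r" "\<forall>j\<in>{1..<r}. (g^^j) y \<notin> {c..<d}" "(g^^r) y \<in> {c..<d}"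
  shows "translation_on (g^^r) {y..<y + \<delta>} \<and> (g^^r) ` {y..<y + \<delta>} \<subseteq> {c..<d}"
proof -
  obtain r' where r': "r = Suc r'" using assms(1) by (cases r) auto
  have "\<forall>j\<in>{1..r'}. (g^^j) y \<notin> {c..<d}" using assms(2) r' by auto
  note previous = cell_translated_before_return[OF this]
  have translates: "translation_on (g^^r) {y..<y + \<delta>}"
    unfolding r' using translation_step previous by blast
  moreover have "\<forall>j\<in>{1..<r}. \<forall>z\<in>{y..<y + \<delta>}. (g^^j) z \<notin> {c..<d}"
    using previous r' by auto
  ultimately show ?thesis using return_inside assms(3) by blast
qed

end

text \<open>A point that never returned would have a neighbourhood moved rigidly, and never into
  \<open>[c, d)\<close>, by all iterates; two of these translates overlap, contradicting injectivity.\<close>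

lemma first_return:
  assumes "-1 \<le> c" "d \<le> 1" "y \<in> {c..<d}"
  shows "\<exists>n\<ge>1. (g^^n) y \<in> {c..<d}"
proof (rule ccontr)
  assume "\<not> (\<exists>n\<ge>1. (g^^n) y \<in> {c..<d})"
  then have never: "\<forall>j\<in>{1..k}. (g^^j) y \<notin> {c..<d}" for k by auto
  define D where "D = insert (d - y) ((\<lambda>z. z - y) ` (return_breaks c d \<inter> {y<..}))"
  have "finite D" using finite_return_breaks[OF assms(1,2)] unfolding D_def by auto
  moreover have "\<forall>x\<in>D. 0 < x" using assms(3) unfolding D_def by auto
  ultimately have "0 < Min D" by (simp add: D_def Min_gr_iff)
  define \<delta> where "\<delta> = Min D"
  have "\<delta> \<le> d - y" unfolding \<delta>_def D_def using \<open>finite D\<close> D_def by (intro Min_le) auto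
  have gap: "return_breaks c d \<inter> {y<..<y + \<delta>} = {}"
  proof (rule ccontr)
    assume "return_breaks c d \<inter> {y<..<y + \<delta>} \<noteq> {}"
    then obtain z where "z \<in> return_breaks c d" "y < z" "z < y + \<delta>" by auto
    then have "z - y \<in> D" unfolding D_def by auto
    then show False using Min_le[OF \<open>finite D\<close>] \<open>z < y + \<delta>\<close> unfolding \<delta>_def by force
  qed
  have cell_bounds: "c \<le> y" "0 < \<delta>" "y + \<delta> \<le> d"
    using assms(3) \<open>0 < Min D\<close> \<open>\<delta> \<le> d - y\<close> unfolding \<delta>_def by auto
  note cell_k = cell_translated_before_return[OF assms(1) cell_bounds assms(2) gap never]
  have cell: "translation_on (g^^k) {y..<y + \<delta>}"
      "\<forall>j\<in>{1..k}. \<forall>z\<in>{y..<y + \<delta>}. (g^^j) z \<notin> {c..<d}" for k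
    using cell_k[of k] by auto
  obtain i j where ij: "i < j" "dist ((g^^Suc i) y) ((g^^Suc j) y) < \<delta>"
  proof (rule compact_sequence_close_pair[of "{-1..1}" "\<lambda>n. (g^^Suc n) y" \<delta>])
    show "(g^^Suc n) y \<in> {-1..1}" for n using funpow_maps_into[of y "Suc n"] assms by auto
  qed (use cell_bounds in auto)
  obtain s where s: "\<And>z. z \<in> {y..<y + \<delta>} \<Longrightarrow> (g^^Suc i) z = z + s"
    using cell(1)[of "Suc i"] unfolding translation_on_def by blast
  obtain s' where s': "\<And>z. z \<in> {y..<y + \<delta>} \<Longrightarrow> (g^^Suc j) z = z + s'"
    using cell(1)[of "Suc j"] unfolding translation_on_def by blast
  define w where "w = max (y + s) (y + s')"
  have z12: "w - s \<in> {y..<y + \<delta>}" "w - s' \<in> {y..<y + \<delta>}"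
    using ij(2) s[of y] s'[of y] cell_bounds unfolding w_def dist_real_def by auto
  have "Suc j = Suc i + (j - i)" using ij(1) by simp
  then have "(g^^Suc j) (w - s') = (g^^Suc i) ((g^^(j - i)) (w - s'))"
    by (simp only: funpow_add comp_apply)
  then have "(g^^Suc i) (w - s) = (g^^Suc i) ((g^^(j - i)) (w - s'))"
    using s[OF z12(1)] s'[OF z12(2)] by simp
  moreover have "w - s \<in> IntI" "w - s' \<in> IntI" using z12 cell_bounds assms by auto
  ultimately have "w - s = (g^^(j - i)) (w - s')"
    using funpow_eqD funpow_maps_into by blast
  moreover have "(g^^(j - i)) (w - s') \<notin> {c..<d}"
    using cell(2)[of "j - i"] z12(2) ij(1) by auto
  ultimately show False using z12(1) cell_bounds by auto
qed


lemma first_return_cells: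
  assumes "-1 \<le> c" "c < d" "d \<le> 1"
  obtains A \<delta> r where "finite A"
    "\<And>v. v \<in> {c..<d} \<Longrightarrow> \<exists>a\<in>A. v \<in> {a..<a + \<delta> a}"
    "\<And>a. a \<in> A \<Longrightarrow> {a..<a + \<delta> a} \<subseteq> {c..<d}"
    "\<And>a. a \<in> A \<Longrightarrow> 1 \<le> r a \<and> (g^^r a) ` {a..<a + \<delta> a} \<subseteq> {c..<d}"
    "\<And>a k. a \<in> A \<Longrightarrow> k < r a \<Longrightarrow> translation_on (g^^k) {a..<a + \<delta> a}"
proof -
  define A where "A = insert c (return_breaks c d)"
  have "finite A" unfolding A_def using finite_return_breaks[OF assms(1,3)] by simp
  have A_sub: "A \<subseteq> {c..<d}" using assms(2) unfolding A_def return_breaks_def by auto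
  define \<delta> where "\<delta> a = Min ((\<lambda>z. z - a) ` {z \<in> insert d A. a < z})" for a
  have \<delta>_le: "\<delta> a \<le> z - a" if "z \<in> insert d A" "a < z" for a z
    unfolding \<delta>_def using \<open>finite A\<close> that by (intro Min_le) auto
  have \<delta>_gt: "x < \<delta> a" if "a < d" "x < d - a" "\<And>z. z \<in> A \<Longrightarrow> a < z \<Longrightarrow> x < z - a" for a x
    unfolding \<delta>_def using \<open>finite A\<close> that by (subst Min_gr_iff) auto
  have cell: "c \<le> a" "0 < \<delta> a" "a + \<delta> a \<le> d" "return_breaks c d \<inter> {a<..<a + \<delta> a} = {}"
    if "a \<in> A" for a
  proof -
    show "c \<le> a" "0 < \<delta> a" using A_sub that by (auto intro!: \<delta>_gt)
    show "a + \<delta> a \<le> d" using \<delta>_le[of d a] A_sub that by auto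
    show "return_breaks c d \<inter> {a<..<a + \<delta> a} = {}"
      using \<delta>_le[of _ a] unfolding A_def by fastforce
  qed
  define r where "r a = (LEAST n. 1 \<le> n \<and> (g^^n) a \<in> {c..<d})" for a
  have r: "1 \<le> r a" "(g^^r a) a \<in> {c..<d}" "\<forall>j\<in>{1..<r a}. (g^^j) a \<notin> {c..<d}"
    if "a \<in> A" for a
  proof -
    have "\<exists>n. 1 \<le> n \<and> (g^^n) a \<in> {c..<d}"
      using first_return[OF assms(1,3)] A_sub that by blast
    from LeastI_ex[OF this] not_less_Least[of _ "\<lambda>n. 1 \<le> n \<and> (g^^n) a \<in> {c..<d}"]
    show "1 \<le> r a" "(g^^r a) a \<in> {c..<d}" "\<forall>j\<in>{1..<r a}. (g^^j) a \<notin> {c..<d}"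
      unfolding r_def by auto
  qed
  show thesis
  proof (rule that[of A \<delta> r])
    fix v assume v: "v \<in> {c..<d}"
    obtain a where a: "a \<in> A" "a \<le> v" "\<And>x. x \<in> A \<Longrightarrow> a < x \<Longrightarrow> v < x"
      using finite_left_neighbour[OF \<open>finite A\<close>, of c v] v unfolding A_def by auto
    have "v - a < \<delta> a" using v a by (intro \<delta>_gt) auto
    then show "\<exists>a\<in>A. v \<in> {a..<a + \<delta> a}" using a by auto
  next
    fix a assume "a \<in> A"
    show "{a..<a + \<delta> a} \<subseteq> {c..<d}" using cell[OF \<open>a \<in> A\<close>] by auto
    show "1 \<le> r a \<and> (g^^r a) ` {a..<a + \<delta> a} \<subseteq> {c..<d}"
      using cell_returns[OF assms(1) cell(1-3)[OF \<open>a \<in> A\<close>] assms(3) cell(4)[OF \<open>a \<in> A\<close>]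
          r(1,3,2)[OF \<open>a \<in> A\<close>]] r(1)[OF \<open>a \<in> A\<close>] by blast
    fix k assume "k < r a"
    then have "\<forall>j\<in>{1..k}. (g^^j) a \<notin> {c..<d}" using r(3)[OF \<open>a \<in> A\<close>] by auto
    then show "translation_on (g^^k) {a..<a + \<delta> a}"
      using cell_translated_before_return[OF assms(1) cell(1-3)[OF \<open>a \<in> A\<close>] assms(3)
          cell(4)[OF \<open>a \<in> A\<close>]] by blast
  qed (rule \<open>finite A\<close>)
qed

end

section \<open>Interval exchange transformations\<close>

locale iet =
  fixes f :: "real \<Rightarrow> real" and p q :: "'a::finite \<Rightarrow> real"
  assumes is_iet: "is_iet f p q"
begin

lemma left_lt_right: "p \<alpha> < q \<alpha>"
  and pieces_disjoint: "\<alpha> \<noteq> \<beta> \<Longrightarrow> piece p q \<alpha> \<inter> piece p q \<beta> = {}"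
  and Union_pieces: "(\<Union>\<alpha>. piece p q \<alpha>) = IntI"
  and bij_f: "bij_betw f IntI IntI"
  and translation_on_piece: "translation_on f (piece p q \<alpha>)"
  using is_iet unfolding is_iet_def translation_on_def by auto

lemma mem_piece_iff [simp]: "x \<in> piece p q \<alpha> \<longleftrightarrow> p \<alpha> \<le> x \<and> x < q \<alpha>"
  by (simp add: piece_def)

lemma piece_subset_I: "p \<alpha> \<le> x \<Longrightarrow> x < q \<alpha> \<Longrightarrow> x \<in> IntI"
  using Union_pieces mem_piece_iff by blast

lemma left_endpoint_in_I: "p \<alpha> \<in> IntI"
  using piece_subset_I[of \<alpha> "p \<alpha>"] left_lt_right[of \<alpha>] by simp

lemma ex_piece: "x \<in> IntI \<Longrightarrow> \<exists>\<alpha>. p \<alpha> \<le> x \<and> x < q \<alpha>"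
  using Union_pieces mem_piece_iff by blast

lemma piece_unique: "p \<alpha> \<le> x \<Longrightarrow> x < q \<alpha> \<Longrightarrow> p \<beta> \<le> x \<Longrightarrow> x < q \<beta> \<Longrightarrow> \<alpha> = \<beta>"
  using pieces_disjoint[of \<alpha> \<beta>] mem_piece_iff by blast

lemma f_piece: "p \<alpha> \<le> x \<Longrightarrow> x < q \<alpha> \<Longrightarrow> f x = x + (f (p \<alpha>) - p \<alpha>)"
  using translation_onD[OF translation_on_piece[of \<alpha>], of "p \<alpha>" x] left_lt_right[of \<alpha>] by simp

lemma f_maps_into: "x \<in> IntI \<Longrightarrow> f x \<in> IntI"
  using bij_f bij_betwE by blast

lemma f_eqD: "x \<in> IntI \<Longrightarrow> y \<in> IntI \<Longrightarrow> f x = f y \<Longrightarrow> x = y"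
  using bij_f unfolding bij_betw_def inj_on_def by blast

definition finv :: "real \<Rightarrow> real" where "finv = inv_into IntI f"

lemma finv_maps_into: "y \<in> IntI \<Longrightarrow> finv y \<in> IntI"
  unfolding finv_def using bij_f by (metis bij_betw_def inv_into_into)

lemma f_finv: "y \<in> IntI \<Longrightarrow> f (finv y) = y"
  unfolding finv_def using bij_f by (metis bij_betw_def f_inv_into_f)

lemma finv_f: "x \<in> IntI \<Longrightarrow> finv (f x) = x"
  unfolding finv_def using bij_f by (simp add: bij_betw_def inv_into_f_f)

lemma minus_one_left_endpoint: "-1 \<in> range p"
proof -
  obtain \<alpha> where "p \<alpha> \<le> -1" using ex_piece[of "-1"] by auto
  then have "p \<alpha> = -1" using left_endpoint_in_I[of \<alpha>] by simp
  then show ?thesis by (metis rangeI)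
qed

text \<open>A point with image \<open>-1\<close> must be a left endpoint: otherwise points slightly to its left,
  in the same piece, would be mapped below \<open>-1\<close>.\<close>

lemma preimage_minus_one: "f x = -1 \<Longrightarrow> x \<in> IntI \<Longrightarrow> x \<in> range p"
proof -
  assume x: "f x = -1" "x \<in> IntI"
  obtain \<alpha> where a: "p \<alpha> \<le> x" "x < q \<alpha>" using ex_piece[OF x(2)] by blast
  have "f (p \<alpha>) \<in> IntI" using f_maps_into[OF left_endpoint_in_I] .
  then have "p \<alpha> = x" using f_piece[OF a] x a by auto
  then show ?thesis by (metis rangeI)
qed

lemma minus_one_image_left_endpoint: "-1 \<in> f ` range p"
proof -
  have "-1 \<in> f ` IntI" using bij_betw_imp_surj_on[OF bij_f] by simp
  then obtain x where "x \<in> IntI" "f x = -1" by (metis imageE)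
  then have "x \<in> range p" by (rule preimage_minus_one[rotated])
  then show ?thesis using \<open>f x = -1\<close> by (metis image_eqI)
qed

lemma f_right_translation: "x \<in> IntI \<Longrightarrow> right_translation_at f x"
proof -
  assume x: "x \<in> IntI"
  obtain \<alpha> where a: "p \<alpha> \<le> x" "x < q \<alpha>" using ex_piece[OF x] by blast
  show ?thesis
  proof (rule right_translation_atI[of "q \<alpha> - x"])
    fix z assume "x \<le> z" "z < x + (q \<alpha> - x)"
    then have z: "p \<alpha> \<le> z" "z < q \<alpha>" using a by auto
    show "z \<in> IntI \<and> f z = z + (f x - x)"
      using piece_subset_I[OF z] f_piece[OF z] f_piece[OF a] by simp
  qed (use a in simp)
qed

lemma f_translation: "x \<in> IntI \<Longrightarrow> x \<notin> range p \<Longrightarrow> translation_at f x"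
proof -
  assume x: "x \<in> IntI" "x \<notin> range p"
  obtain \<alpha> where a: "p \<alpha> \<le> x" "x < q \<alpha>" using ex_piece[OF x(1)] by blast
  have "p \<alpha> \<noteq> x" using x(2) by (metis rangeI)
  then have "p \<alpha> < x" using a(1) by simp
  show ?thesis
  proof (rule translation_atI[of "min (x - p \<alpha>) (q \<alpha> - x)"])
    fix z assume "x - min (x - p \<alpha>) (q \<alpha> - x) < z" "z < x + min (x - p \<alpha>) (q \<alpha> - x)"
    then have z: "p \<alpha> \<le> z" "z < q \<alpha>" by auto
    show "z \<in> IntI \<and> f z = z + (f x - x)"
      using piece_subset_I[OF z] f_piece[OF z] f_piece[OF a] by simp
  qed (use a \<open>p \<alpha> < x\<close> in simp)
qed

lemma finv_right_translation: "w \<in> IntI \<Longrightarrow> right_translation_at finv w"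
proof -
  assume w: "w \<in> IntI"
  define y where "y = finv w"
  have y: "y \<in> IntI" "f y = w" using finv_maps_into[OF w] f_finv[OF w] unfolding y_def by auto
  obtain \<alpha> where a: "p \<alpha> \<le> y" "y < q \<alpha>" using ex_piece[OF y(1)] by blast
  show ?thesis
  proof (rule right_translation_atI[of "q \<alpha> - y"])
    fix z assume z: "w \<le> z" "z < w + (q \<alpha> - y)"
    define y' where "y' = z - (w - y)"
    have y': "p \<alpha> \<le> y'" "y' < q \<alpha>" using z a f_piece[OF a] y unfolding y'_def by auto
    have "f y' = z" using f_piece[OF y'] f_piece[OF a] y unfolding y'_def by simp
    moreover have "finv (f y') = y'" using finv_f[OF piece_subset_I[OF y']] .
    ultimately show "z \<in> IntI \<and> finv z = z + (finv w - w)"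
      using f_maps_into[OF piece_subset_I[OF y']] unfolding y'_def y_def[symmetric] by simp
  qed (use a in simp)
qed

lemma finv_translation: "w \<in> IntI \<Longrightarrow> w \<notin> f ` range p \<Longrightarrow> translation_at finv w"
proof -
  assume w: "w \<in> IntI" "w \<notin> f ` range p"
  define y where "y = finv w"
  have y: "y \<in> IntI" "f y = w" using finv_maps_into[OF w(1)] f_finv[OF w(1)] unfolding y_def by auto
  then have "y \<notin> range p" using w(2) by auto
  then obtain e where e: "e > 0" "\<And>z. y - e < z \<Longrightarrow> z < y + e \<Longrightarrow> z \<in> IntI \<and> f z = z + (f y - y)"
    using translation_atE[OF f_translation[OF y(1)]] by blast
  show ?thesis
  proof (rule translation_atI[OF e(1)])
    fix z assume z: "w - e < z" "z < w + e"
    define y' where "y' = z - (w - y)"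
    have y': "y' \<in> IntI" "f y' = z" using e(2)[of y'] z y unfolding y'_def by auto
    then have "finv z = y'" using finv_f[of y'] by simp
    then show "z \<in> IntI \<and> finv z = z + (finv w - w)"
      using f_maps_into[OF y'(1)] y'(2) unfolding y'_def y_def[symmetric] by simp
  qed
qed

sublocale fwd: piecewise_translation f "range p"
proof
  show "inj_on f IntI" using bij_f by (simp add: bij_betw_def)
  show "\<And>y. y \<in> IntI \<Longrightarrow> f y \<in> IntI" by (rule f_maps_into)
qed (simp_all add: minus_one_left_endpoint f_right_translation f_translation)

sublocale bwd: piecewise_translation finv "f ` range p"
proof
  show "inj_on finv IntI" by (metis f_finv inj_onI)
  show "\<And>y. y \<in> IntI \<Longrightarrow> finv y \<in> IntI" by (rule finv_maps_into)
qed (simp_all add: minus_one_image_left_endpoint finv_right_translation finv_translation)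

lemma f_surj: "y \<in> IntI \<Longrightarrow> \<exists>x\<in>IntI. f x = y"
  using bij_betw_imp_surj_on[OF bij_f] by (metis imageE)

lemma right_endpoint_is_left_endpoint:
  assumes "q \<alpha> < 1"
  obtains \<beta> where "p \<beta> = q \<alpha>"
proof -
  have "q \<alpha> \<in> IntI" using assms left_lt_right[of \<alpha>] left_endpoint_in_I[of \<alpha>] by simp
  then obtain \<beta> where b: "p \<beta> \<le> q \<alpha>" "q \<alpha> < q \<beta>" using ex_piece by blast
  have "\<not> p \<beta> < q \<alpha>"
  proof
    assume "p \<beta> < q \<alpha>"
    then have "\<alpha> = \<beta>"
      using piece_unique[of \<alpha> "max (p \<alpha>) (p \<beta>)" \<beta>] b left_lt_right[of \<alpha>] by auto
    then show False using b by simp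
  qed
  then show thesis using b that by force
qed

text \<open>If \<open>f\<close> translates \<open>[a, b)\<close> by \<open>s\<close>, the point \<open>b + s\<close> has a preimage; unless it is a left
  endpoint, \<open>f\<close> is a translation just left of it, so by injectivity that preimage is \<open>b\<close>.\<close>

lemma translation_continues:
  assumes "-1 \<le> a" "a < b" "b \<le> 1" "\<And>z. a \<le> z \<Longrightarrow> z < b \<Longrightarrow> f z = z + s" "b + s \<in> IntI"
  shows "(\<exists>\<alpha>. f (p \<alpha>) = b + s) \<or> f b = b + s"
proof -
  obtain y where y: "y \<in> IntI" "f y = b + s" using f_surj[OF assms(5)] by blast
  obtain \<alpha> where a: "p \<alpha> \<le> y" "y < q \<alpha>" using ex_piece[OF y(1)] by blast
  show ?thesis
  proof (cases "p \<alpha> = y")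
    case False
    define \<epsilon> where "\<epsilon> = min (y - p \<alpha>) (b - a)"
    have \<epsilon>: "0 < \<epsilon>" "\<epsilon> \<le> y - p \<alpha>" "\<epsilon> \<le> b - a" using False a assms(2) unfolding \<epsilon>_def by auto
    have in_piece: "p \<alpha> \<le> y - \<epsilon>" "y - \<epsilon> < q \<alpha>" using \<epsilon> a by auto
    have "f (y - \<epsilon>) = f (b - \<epsilon>)"
      using f_piece[OF in_piece] f_piece[OF a] y(2) assms(4)[of "b - \<epsilon>"] \<epsilon> by simp
    moreover have "b - \<epsilon> \<in> IntI" using \<epsilon> assms(1,3) by auto
    ultimately have "y - \<epsilon> = b - \<epsilon>" using f_eqD piece_subset_I[OF in_piece] by blast
    then show ?thesis using y(2) by simp
  qed (use y in auto)
qed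

lemma periodic_preimage:
  assumes "1 \<le> k" "y \<in> IntI" "x \<in> IntI" "f x = y" "(f^^k) y = y"
  shows "(f^^k) x = x"
proof -
  obtain k' where k': "k = Suc k'" using assms(1) by (cases k) auto
  have "f ((f^^k') y) = f x" using assms(4,5) unfolding k' by simp
  then have "(f^^k') y = x" using f_eqD[OF fwd.funpow_maps_into[OF assms(2)] assms(3)] by blast
  then show ?thesis using assms(4) unfolding k' by (simp only: funpow_Suc_right comp_apply)
qed

lemma f_funpow_finv_funpow: "y \<in> IntI \<Longrightarrow> (f^^n) ((finv^^n) y) = y"
proof (induction n arbitrary: y)
  case (Suc n)
  have "(f^^Suc n) ((finv^^Suc n) y) = (f^^n) (f (finv ((finv^^n) y)))"
    by (simp only: funpow_Suc_right[where f = f] funpow.simps(2)[where f = finv] comp_apply)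
  also have "\<dots> = y" using f_finv[OF bwd.funpow_maps_into[OF Suc.prems]] Suc.IH[OF Suc.prems] by simp
  finally show ?case .
qed simp

lemma arbitrarily_late_preimage:
  assumes "-1 \<le> c" "d \<le> 1" "w \<in> {c..<d}"
  shows "\<exists>s v. N \<le> s \<and> v \<in> {c..<d} \<and> (f^^s) v = w"
proof (induction N)
  case 0
  show ?case using assms(3) by (intro exI[of _ 0] exI[of _ w]) simp
next
  case (Suc N)
  then obtain s v where sv: "N \<le> s" "v \<in> {c..<d}" "(f^^s) v = w" by blast
  obtain t where t: "t \<ge> 1" "(finv^^t) v \<in> {c..<d}"
    using bwd.first_return[OF assms(1,2) sv(2)] by blast
  have "v \<in> IntI" using sv(2) assms by auto
  then have "(f^^(s + t)) ((finv^^t) v) = w" using sv(3) f_funpow_finv_funpow[of v t]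
    by (simp add: funpow_add)
  then show ?case using t sv(1) by (intro exI[of _ "s + t"] exI[of _ "(finv^^t) v"]) auto
qed

definition visitors :: "real \<Rightarrow> real \<Rightarrow> real set" where
  "visitors c d = {y \<in> IntI. \<exists>n. (f^^n) y \<in> {c..<d}}"

lemma visitors_invariant:
  assumes "-1 \<le> c" "d \<le> 1" "y \<in> IntI"
  shows "f y \<in> visitors c d \<longleftrightarrow> y \<in> visitors c d"
proof
  assume "f y \<in> visitors c d"
  then obtain n where "(f^^n) (f y) \<in> {c..<d}" unfolding visitors_def by blast
  then have "(f^^Suc n) y \<in> {c..<d}" by (simp only: funpow_Suc_right comp_apply)
  then show "y \<in> visitors c d" using assms(3) unfolding visitors_def by blast
next
  assume "y \<in> visitors c d"
  then obtain n where n: "(f^^n) y \<in> {c..<d}" unfolding visitors_def by blast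
  obtain m where "(f^^Suc m) y \<in> {c..<d}"
  proof (cases n)
    case 0
    then obtain r where "r \<ge> 1" "(f^^r) y \<in> {c..<d}"
      using fwd.first_return[OF assms(1,2)] n by auto
    then show thesis using that[of "r - 1"] by simp
  qed (use n that in blast)
  then have "(f^^m) (f y) \<in> {c..<d}" by (simp only: funpow_Suc_right comp_apply)
  then show "f y \<in> visitors c d" using f_maps_into[OF assms(3)] unfolding visitors_def by blast
qed

lemma visitor_last_departure:
  assumes "-1 \<le> c" "d \<le> 1" "y \<in> visitors c d"
  obtains m v where "v \<in> {c..<d}" "(f^^m) v = y" "\<forall>i\<in>{1..m}. (f^^i) v \<notin> {c..<d}"
proof -
  obtain n where n: "(f^^n) y \<in> {c..<d}" and "y \<in> IntI"
    using assms(3) unfolding visitors_def by blast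
  obtain s v where sv: "n \<le> s" "v \<in> {c..<d}" "(f^^s) v = (f^^n) y"
    using arbitrarily_late_preimage[OF assms(1,2) n] by blast
  have "v \<in> IntI" using sv(2) assms by auto
  have "(f^^n) ((f^^(s - n)) v) = (f^^n) y"
    using sv(1,3) by (metis funpow_add le_add_diff_inverse comp_apply)
  then have "(f^^(s - n)) v = y"
    using fwd.funpow_eqD[OF fwd.funpow_maps_into[OF \<open>v \<in> IntI\<close>] \<open>y \<in> IntI\<close>] by blast
  then have "\<exists>m v. v \<in> {c..<d} \<and> (f^^m) v = y" using sv(2) by blast
  then obtain m where m: "\<exists>v. v \<in> {c..<d} \<and> (f^^m) v = y"
    and least: "\<And>m'. m' < m \<Longrightarrow> \<not> (\<exists>v. v \<in> {c..<d} \<and> (f^^m') v = y)"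
    using exists_least_iff[of "\<lambda>m. \<exists>v. v \<in> {c..<d} \<and> (f^^m) v = y"] by blast
  then obtain v where v: "v \<in> {c..<d}" "(f^^m) v = y" by blast
  have "(f^^i) v \<notin> {c..<d}" if "i \<in> {1..m}" for i
  proof
    assume "(f^^i) v \<in> {c..<d}"
    moreover have "(f^^(m - i)) ((f^^i) v) = y"
      using v(2) that by (metis funpow_add le_add_diff_inverse2 atLeastAtMost_iff comp_apply)
    ultimately show False using least[of "m - i"] that by auto
  qed
  then show thesis using that v by blast
qed

lemma visitors_Ico_Union:
  assumes "-1 \<le> c" "c < d" "d \<le> 1"
  obtains F where "finite F" "visitors c d = (\<Union>(s, t)\<in>F. {s..<t})"
proof -
  obtain A \<delta> r where "finite A"
    and cover: "\<And>v. v \<in> {c..<d} \<Longrightarrow> \<exists>a\<in>A. v \<in> {a..<a + \<delta> a}"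
    and inside: "\<And>a. a \<in> A \<Longrightarrow> {a..<a + \<delta> a} \<subseteq> {c..<d}"
    and returns: "\<And>a. a \<in> A \<Longrightarrow> 1 \<le> r a \<and> (f^^r a) ` {a..<a + \<delta> a} \<subseteq> {c..<d}"
    and before: "\<And>a k. a \<in> A \<Longrightarrow> k < r a \<Longrightarrow> translation_on (f^^k) {a..<a + \<delta> a}"
    using fwd.first_return_cells[OF assms] by blast
  define F where "F = (\<lambda>(a, k). ((f^^k) a, (f^^k) a + \<delta> a)) ` Sigma A (\<lambda>a. {..<r a})"
  have "finite F" unfolding F_def using \<open>finite A\<close> by auto
  moreover have "visitors c d = (\<Union>(s, t)\<in>F. {s..<t})"
  proof (intro set_eqI iffI)
    fix y assume "y \<in> visitors c d"
    then obtain m v where mv: "v \<in> {c..<d}" "(f^^m) v = y" "\<forall>i\<in>{1..m}. (f^^i) v \<notin> {c..<d}"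
      using visitor_last_departure[OF assms(1,3)] by blast
    obtain a where a: "a \<in> A" "v \<in> {a..<a + \<delta> a}" using cover[OF mv(1)] by blast
    have "m < r a"
    proof (rule ccontr)
      assume "\<not> m < r a"
      then have "r a \<in> {1..m}" using returns[OF a(1)] by simp
      moreover have "(f^^r a) v \<in> {c..<d}" using returns[OF a(1)] a(2) by blast
      ultimately show False using mv(3) by blast
    qed
    then have "y = v + ((f^^m) a - a)"
      using translation_onD[OF before[OF a(1)], of m a v] a(2) mv(2) by simp
    then have "y \<in> {(f^^m) a..<(f^^m) a + \<delta> a}" using a(2) by simp
    moreover have "((f^^m) a, (f^^m) a + \<delta> a) \<in> F" unfolding F_def using a(1) \<open>m < r a\<close> by force
    ultimately show "y \<in> (\<Union>(s, t)\<in>F. {s..<t})" by force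
  next
    fix y assume "y \<in> (\<Union>(s, t)\<in>F. {s..<t})"
    then obtain a k where a: "a \<in> A" "k < r a" and y: "y \<in> {(f^^k) a..<(f^^k) a + \<delta> a}"
      unfolding F_def by force
    define v where "v = y - ((f^^k) a - a)"
    have v: "v \<in> {a..<a + \<delta> a}" using y unfolding v_def by simp
    have "(f^^k) v = y"
      using translation_onD[OF before[OF a], of a v] v y unfolding v_def by simp
    moreover have "v \<in> IntI" using v inside[OF a(1)] assms by auto
    ultimately have "y \<in> IntI" using fwd.funpow_maps_into by blast
    have "(f^^r a) v \<in> {c..<d}" using returns[OF a(1)] v by blast
    moreover have "(f^^r a) v = (f^^(r a - k)) ((f^^k) v)"
      using a(2) by (metis funpow_add le_add_diff_inverse2 less_imp_le_nat comp_apply)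
    ultimately show "y \<in> visitors c d"
      unfolding visitors_def using \<open>(f^^k) v = y\<close> \<open>y \<in> IntI\<close> by auto
  qed
  ultimately show thesis by (rule that)
qed

end

section \<open>Billiard-like transformations with the modified Keane condition\<close>

locale billiard_iet = iet f p q for f :: "real \<Rightarrow> real" and p q :: "'a::finite \<Rightarrow> real" +
  assumes irreducible: "iet_irreducible f p q"
    and billiard: "billiard_like f p q"
    and keane: "modified_keane f p"
begin

lemma left_endpoint_orbit:
  "1 \<le> m \<Longrightarrow> (f^^m) (p \<alpha>) = p \<beta> \<Longrightarrow> p \<beta> = -1 \<or> p \<beta> = 0"
  using keane unfolding modified_keane_def by blast

lemma piece_in_half: "piece p q \<alpha> \<subseteq> {-1..<0} \<or> piece p q \<alpha> \<subseteq> {0..<1}"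
  and image_in_half: "f ` piece p q \<alpha> \<subseteq> {-1..<0} \<or> f ` piece p q \<alpha> \<subseteq> {0..<1}"
  using billiard unfolding billiard_like_def by blast+

lemma piece_in_half_iff:
  assumes "l \<in> {-1, 0}"
  shows "piece p q \<alpha> \<subseteq> {l..<l + 1} \<longleftrightarrow> l \<le> p \<alpha> \<and> p \<alpha> < l + 1"
proof
  have "p \<alpha> \<in> piece p q \<alpha>" using left_lt_right[of \<alpha>] by simp
  then show "piece p q \<alpha> \<subseteq> {l..<l + 1} \<Longrightarrow> l \<le> p \<alpha> \<and> p \<alpha> < l + 1"
    and "l \<le> p \<alpha> \<and> p \<alpha> < l + 1 \<Longrightarrow> piece p q \<alpha> \<subseteq> {l..<l + 1}"
    using piece_in_half[of \<alpha>] assms by fastforce+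
qed

lemma two_pieces_in_half:
  assumes "l \<in> {-1, 0}"
  obtains \<delta> where "\<delta> \<noteq> \<gamma>" "l \<le> p \<delta>" "p \<delta> < l + 1"
proof -
  have "2 \<le> card {\<alpha>. piece p q \<alpha> \<subseteq> {l..<l + 1}}"
    using billiard assms unfolding billiard_like_def by auto
  then have "\<not> {\<alpha>. piece p q \<alpha> \<subseteq> {l..<l + 1}} \<subseteq> {\<gamma>}"
    using card_mono[of "{\<gamma>}" "{\<alpha>. piece p q \<alpha> \<subseteq> {l..<l + 1}}"] by auto
  then show thesis using that piece_in_half_iff[OF assms] by blast
qed

lemma right_end_of_first_piece:
  assumes "l \<in> {-1, 0}" "p \<gamma> = l"
  shows "q \<gamma> < l + 1"
proof -
  obtain \<delta> where \<delta>: "\<delta> \<noteq> \<gamma>" "l \<le> p \<delta>" "p \<delta> < l + 1" using two_pieces_in_half[OF assms(1)] .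
  have "q \<gamma> \<le> p \<delta>"
  proof (rule ccontr)
    assume "\<not> q \<gamma> \<le> p \<delta>"
    then have "\<delta> = \<gamma>" using piece_unique[of \<delta> "p \<delta>" \<gamma>] left_lt_right[of \<delta>] assms(2) \<delta>(2) by simp
    then show False using \<delta>(1) by simp
  qed
  then show ?thesis using \<delta>(3) by simp
qed

lemma half_boundary_left_endpoint:
  assumes "l \<in> {-1, 0}"
  obtains \<gamma> where "p \<gamma> = l"
proof -
  obtain \<gamma> where \<gamma>: "p \<gamma> \<le> l" "l < q \<gamma>" using ex_piece[of l] assms by auto
  have "l \<le> p \<gamma>"
  proof (rule ccontr)
    assume "\<not> l \<le> p \<gamma>"
    then have "l = 0" "-1 \<le> p \<gamma>" "p \<gamma> < 0" using assms left_endpoint_in_I[of \<gamma>] by auto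
    then have "piece p q \<gamma> \<subseteq> {-1..<0}" using piece_in_half_iff[of "-1" \<gamma>] by simp
    moreover have "0 \<in> piece p q \<gamma>" using \<gamma> \<open>l = 0\<close> \<open>p \<gamma> < 0\<close> by simp
    ultimately show False by auto
  qed
  then show thesis using \<gamma>(1) that by simp
qed

lemma zero_image_of_left_endpoint: obtains \<alpha> where "f (p \<alpha>) = 0"
proof -
  obtain x where x: "x \<in> IntI" "f x = 0" using f_surj[of 0] by auto
  obtain \<alpha> where a: "p \<alpha> \<le> x" "x < q \<alpha>" using ex_piece[OF x(1)] by blast
  have "p \<alpha> = x"
  proof (rule ccontr)
    assume "p \<alpha> \<noteq> x"
    then have "f (p \<alpha>) < 0" using f_piece[OF a] f_piece[of \<alpha> "p \<alpha>"] left_lt_right[of \<alpha>] x(2) a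
      by simp
    moreover have "f (p \<alpha>) \<in> f ` piece p q \<alpha>" "f x \<in> f ` piece p q \<alpha>"
      using a left_lt_right[of \<alpha>] by auto
    ultimately show False using image_in_half[of \<alpha>] x(2) by auto
  qed
  then show thesis using x(2) that by blast
qed

lemma translation_end_image:
  assumes "-1 \<le> a" "a < b" "b \<le> 1" "\<And>z. a \<le> z \<Longrightarrow> z < b \<Longrightarrow> f z = z + s" "b + s \<in> IntI"
    and "b \<in> range p"
  shows "b + s \<in> f ` range p"
proof -
  obtain \<beta> where "b = p \<beta>" using assms(6) by blast
  then show ?thesis using translation_continues[OF assms(1-5)] by (metis image_eqI rangeI)
qed

lemma boundary_not_fixed:
  assumes "l \<in> {-1, 0}"
  shows "f l \<noteq> l"
proof
  assume fixed: "f l = l"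
  obtain \<gamma> where \<gamma>: "p \<gamma> = l" using half_boundary_left_endpoint[OF assms] .
  have q: "l < q \<gamma>" "q \<gamma> < l + 1"
    using left_lt_right[of \<gamma>] right_end_of_first_piece[OF assms \<gamma>] \<gamma> by auto
  then have "q \<gamma> < 1" using assms by auto
  then obtain \<beta> where \<beta>: "p \<beta> = q \<gamma>" by (rule right_endpoint_is_left_endpoint)
  have "q \<gamma> + 0 \<in> f ` range p"
  proof (rule translation_end_image)
    show "f z = z + 0" if "l \<le> z" "z < q \<gamma>" for z
      using f_piece[of \<gamma> z] that \<gamma> fixed by simp
    show "q \<gamma> \<in> range p" using \<beta> by (metis rangeI)
  qed (use assms q in auto)
  then obtain \<alpha> where "f (p \<alpha>) = p \<beta>" using \<beta> by auto
  then show False using left_endpoint_orbit[of 1 \<alpha> \<beta>] \<beta> q assms by auto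
qed

text \<open>If \<open>f\<close> swapped \<open>0\<close> and \<open>-1\<close>, the first pieces of the two halves would be translated by
  \<open>-1\<close> and \<open>+1\<close>; whichever of their right ends comes first after the shift, it is an inner left
  endpoint on the orbit of a left endpoint.\<close>

lemma boundaries_not_swapped: "\<not> (f 0 = -1 \<and> f (-1) = 0)"
proof
  assume swap: "f 0 = -1 \<and> f (-1) = 0"
  obtain \<gamma>0 where \<gamma>0: "p \<gamma>0 = 0" using half_boundary_left_endpoint[of 0] by auto
  obtain \<gamma>1 where \<gamma>1: "p \<gamma>1 = -1" using half_boundary_left_endpoint[of "-1"] by auto
  define q0 where "q0 = q \<gamma>0"
  define q1 where "q1 = q \<gamma>1"
  have q0: "0 < q0" "q0 < 1" using right_end_of_first_piece[of 0 \<gamma>0] left_lt_right[of \<gamma>0] \<gamma>0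
    unfolding q0_def by auto
  have q1: "-1 < q1" "q1 < 0" using right_end_of_first_piece[of "-1" \<gamma>1] left_lt_right[of \<gamma>1] \<gamma>1
    unfolding q1_def by auto
  have shift0: "f z = z - 1" if "0 \<le> z" "z < q0" for z
    using f_piece[of \<gamma>0 z] that \<gamma>0 swap unfolding q0_def by simp
  have shift1: "f z = z + 1" if "-1 \<le> z" "z < q1" for z
    using f_piece[of \<gamma>1 z] that \<gamma>1 swap unfolding q1_def by simp
  obtain \<beta>0 where \<beta>0: "p \<beta>0 = q0"
    using right_endpoint_is_left_endpoint[of \<gamma>0] q0(2) unfolding q0_def by auto
  obtain \<beta>1 where \<beta>1: "p \<beta>1 = q1"
    using right_endpoint_is_left_endpoint[of \<gamma>1] q1(2) unfolding q1_def by auto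
  have "q0 + (-1) \<in> f ` range p"
  proof (rule translation_end_image[of 0])
    show "f z = z + (-1)" if "0 \<le> z" "z < q0" for z using shift0[OF that] by simp
    show "q0 \<in> range p" using \<beta>0 by (metis rangeI)
  qed (use q0 in auto)
  then obtain \<alpha>0 where \<alpha>0: "f (p \<alpha>0) = q0 - 1" by auto
  have "q1 + 1 \<in> f ` range p"
  proof (rule translation_end_image[of "-1"])
    show "f z = z + 1" if "-1 \<le> z" "z < q1" for z using shift1[OF that] .
    show "q1 \<in> range p" using \<beta>1 by (metis rangeI)
  qed (use q1 in auto)
  then obtain \<alpha>1 where \<alpha>1: "f (p \<alpha>1) = q1 + 1" by auto
  consider "q0 < q1 + 1" | "q0 = q1 + 1" | "q1 + 1 < q0" by linarith
  then show False
  proof cases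
    case 1
    then have "(f^^2) (p \<alpha>0) = p \<beta>0" using \<alpha>0 shift1[of "q0 - 1"] q0 \<beta>0 by (simp add: numeral_2_eq_2)
    then show False using left_endpoint_orbit[of 2 \<alpha>0 \<beta>0] \<beta>0 q0 by simp
  next
    case 2
    then have "(f^^1) (p \<alpha>0) = p \<beta>1" using \<alpha>0 \<beta>1 by simp
    then show False using left_endpoint_orbit[of 1 \<alpha>0 \<beta>1] \<beta>1 q1 by simp
  next
    case 3
    then have "(f^^2) (p \<alpha>1) = p \<beta>1" using \<alpha>1 shift0[of "q1 + 1"] q1 \<beta>1 by (simp add: numeral_2_eq_2)
    then show False using left_endpoint_orbit[of 2 \<alpha>1 \<beta>1] \<beta>1 q1 by simp
  qed
qed

text \<open>A periodic boundary point would have a periodic preimage, which must again be a left endpoint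
  on the boundary; so \<open>f\<close> would fix or swap \<open>-1\<close> and \<open>0\<close>.\<close>

lemma boundary_not_periodic:
  assumes "l \<in> {-1, 0}" "1 \<le> k" "(f^^k) l = l"
  shows False
proof -
  have periodic_preimage_boundary: "\<exists>l'\<in>{-1, 0}. f l' = b \<and> (f^^k) l' = l'"
    if b: "b \<in> {-1, 0}" and periodic: "(f^^k) b = b" for b :: real
  proof -
    obtain \<alpha>0 where "f (p \<alpha>0) = 0" by (rule zero_image_of_left_endpoint)
    then have "b \<in> f ` range p" using b minus_one_image_left_endpoint by (auto intro: image_eqI)
    then obtain \<alpha> where \<alpha>: "f (p \<alpha>) = b" by blast
    moreover have "b \<in> IntI" using b by auto
    ultimately have "(f^^k) (p \<alpha>) = p \<alpha>"
      using periodic_preimage[OF assms(2) _ left_endpoint_in_I] periodic by blast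
    then have "p \<alpha> \<in> {-1, 0}" using left_endpoint_orbit[OF assms(2)] by simp
    then show ?thesis using \<alpha> \<open>(f^^k) (p \<alpha>) = p \<alpha>\<close> by blast
  qed
  obtain l1 where l1: "l1 \<in> {-1, 0}" "f l1 = l" "(f^^k) l1 = l1"
    using periodic_preimage_boundary[OF assms(1,3)] by blast
  obtain l2 where l2: "l2 \<in> {-1, 0}" "f l2 = l1"
    using periodic_preimage_boundary[OF l1(1,3)] by blast
  show False
    using assms(1) l1(1,2) l2 boundary_not_fixed[of l] boundary_not_fixed[of l1] boundaries_not_swapped
    by auto
qed

text \<open>The fixed points of \<open>f^k\<close> near a periodic point \<open>y\<close> fill an interval \<open>[a, y + \<delta>)\<close> with
  \<open>a\<close> minimal; at \<open>a\<close> the map \<open>f^k\<close> cannot be a two-sided translation, so the orbit of \<open>a\<close>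
  meets a left endpoint, which is then periodic, contradicting \<open>boundary_not_periodic\<close>.\<close>

lemma no_periodic_point:
  assumes "y \<in> IntI" "1 \<le> k" "(f^^k) y = y"
  shows False
proof -
  obtain \<delta> where \<delta>: "\<delta> > 0" "\<And>z. y \<le> z \<Longrightarrow> z < y + \<delta> \<Longrightarrow> z \<in> IntI \<and> (f^^k) z = z + ((f^^k) y - y)"
    using right_translation_atE[OF fwd.right_translation_funpow[OF assms(1)]] by blast
  define X where "X = {a \<in> {-1..y}. \<forall>z. a \<le> z \<and> z < y + \<delta> \<longrightarrow> (f^^k) z = z}"
  define a where "a = Inf X"
  have "y \<in> X" unfolding X_def using assms(1,3) \<delta>(2) by auto
  have bdd: "bdd_below X" unfolding X_def by (auto intro: bdd_belowI[of _ "-1"])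
  have "-1 \<le> a" unfolding a_def using \<open>y \<in> X\<close> by (intro cInf_greatest) (auto simp: X_def)
  have "a \<le> y" unfolding a_def using \<open>y \<in> X\<close> bdd by (rule cInf_lower)
  have aI: "a \<in> IntI" using \<open>-1 \<le> a\<close> \<open>a \<le> y\<close> assms(1) by auto
  have fixed_right: "(f^^k) z = z" if "a < z" "z < y + \<delta>" for z
  proof -
    have "Inf X < z" using that(1) unfolding a_def .
    then obtain a' where "a' \<in> X" "a' < z" using \<open>y \<in> X\<close> bdd cInf_less_iff[of X z] by auto
    then show ?thesis using that(2) unfolding X_def by auto
  qed
  obtain \<delta>' where \<delta>': "\<delta>' > 0" "\<And>z. a \<le> z \<Longrightarrow> z < a + \<delta>' \<Longrightarrow> z \<in> IntI \<and> (f^^k) z = z + ((f^^k) a - a)"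
    using right_translation_atE[OF fwd.right_translation_funpow[OF aI]] by blast
  define m where "m = min \<delta>' (y + \<delta> - a)"
  have "0 < m" "m \<le> \<delta>'" "m \<le> y + \<delta> - a" using \<delta>(1) \<delta>'(1) \<open>a \<le> y\<close> unfolding m_def by auto
  then have "a < a + m / 2" "a + m / 2 < y + \<delta>" "a + m / 2 < a + \<delta>'" by linarith+
  then have a_fixed: "(f^^k) a = a" using fixed_right[of "a + m / 2"] \<delta>'(2)[of "a + m / 2"] by simp
  show False
  proof (cases "\<exists>j<k. (f^^j) a \<in> range p")
    case True
    then obtain j \<beta> where j: "j < k" "(f^^j) a = p \<beta>" by blast
    have "(f^^k) (p \<beta>) = (f^^j) ((f^^k) a)"
      unfolding j(2)[symmetric] by (metis add.commute funpow_add comp_apply)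
    then have "(f^^k) (p \<beta>) = p \<beta>" using a_fixed j(2) by simp
    moreover from this have "p \<beta> \<in> {-1, 0}" using left_endpoint_orbit[OF assms(2)] by simp
    ultimately show False using boundary_not_periodic[OF _ assms(2)] by blast
  next
    case False
    then have "a \<notin> range p" using assms(2) by (metis funpow_0 less_le_trans zero_less_one)
    then have "a \<noteq> -1" using minus_one_left_endpoint by auto
    obtain \<delta>'' where \<delta>'': "\<delta>'' > 0"
        "\<And>z. a - \<delta>'' < z \<Longrightarrow> z < a + \<delta>'' \<Longrightarrow> z \<in> IntI \<and> (f^^k) z = z + ((f^^k) a - a)"
      using translation_atE[OF fwd.translation_funpow[OF aI \<open>a \<notin> range p\<close>]] False by blast
    define a' where "a' = max (-1) (a - \<delta>'' / 2)"
    have a': "-1 \<le> a'" "a' < a" "a - \<delta>'' < a'"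
      using \<open>a \<noteq> -1\<close> \<open>-1 \<le> a\<close> \<delta>''(1) unfolding a'_def by auto
    have "a' \<in> X"
      unfolding X_def
    proof (intro CollectI conjI allI impI)
      fix z assume z: "a' \<le> z \<and> z < y + \<delta>"
      show "(f^^k) z = z"
      proof (cases "a < z")
        case False
        then show ?thesis using \<delta>''(2)[of z] z a' a_fixed \<delta>''(1) by simp
      qed (use fixed_right z in blast)
    qed (use a' \<open>a \<le> y\<close> in auto)
    then have "a \<le> a'" unfolding a_def using bdd by (rule cInf_lower)
    then show False using a' by simp
  qed
qed

lemma orbit_inj:
  assumes "y \<in> IntI" "(f^^i) y = (f^^j) y"
  shows "i = j"
proof -
  have "False" if "i' < j'" "(f^^i') y = (f^^j') y" for i' j'
  proof -
    have "(f^^(j' - i')) ((f^^i') y) = (f^^i') y"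
      using that by (metis funpow_add le_add_diff_inverse2 less_imp_le_nat comp_apply)
    then show False
      using that(1) by (intro no_periodic_point[OF fwd.funpow_maps_into[OF assms(1)]]) auto
  qed
  then show ?thesis using assms(2) by (metis linorder_neqE_nat)
qed

lemma negative_half_not_invariant: "\<not> f ` {-1..<0} \<subseteq> {-1..<0}"
proof -
  define N where "N = {\<alpha>. p \<alpha> < 0}"
  have N_pieces: "N = {\<alpha>. piece p q \<alpha> \<subseteq> {-1..<0}}"
    unfolding N_def using piece_in_half_iff[of "-1"] left_endpoint_in_I by auto
  have compl_pieces: "- N = {\<alpha>. piece p q \<alpha> \<subseteq> {0..<1}}"
    unfolding N_def using piece_in_half_iff[of 0] left_endpoint_in_I by force
  have "2 \<le> card N" using billiard unfolding billiard_like_def N_pieces by auto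
  moreover have "2 \<le> card (- N)" using billiard unfolding billiard_like_def compl_pieces by auto
  moreover have "CARD('a) = card N + card (- N)"
    using card_Un_disjoint[of N "- N"] by (simp add: Compl_partition)
  ultimately have k: "1 \<le> card N" "card N < CARD('a)" by auto
  have positions: "{\<alpha>. pi0 p \<alpha> \<le> card N} = N"
  proof (intro set_eqI iffI)
    fix \<alpha> assume "\<alpha> \<in> N"
    then have "{\<beta>. p \<beta> \<le> p \<alpha>} \<subseteq> N" unfolding N_def by auto
    then show "\<alpha> \<in> {\<alpha>. pi0 p \<alpha> \<le> card N}" unfolding pi0_def by (simp add: card_mono)
  next
    fix \<alpha> assume \<alpha>: "\<alpha> \<in> {\<alpha>. pi0 p \<alpha> \<le> card N}"
    show "\<alpha> \<in> N"
    proof (rule ccontr)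
      assume "\<alpha> \<notin> N"
      then have "insert \<alpha> N \<subseteq> {\<beta>. p \<beta> \<le> p \<alpha>}" unfolding N_def by auto
      then have "card (insert \<alpha> N) \<le> pi0 p \<alpha>" unfolding pi0_def by (simp add: card_mono)
      then show False using \<alpha> \<open>\<alpha> \<notin> N\<close> by simp
    qed
  qed
  have "(\<Union>\<alpha>\<in>N. piece p q \<alpha>) = {-1..<0}"
  proof (intro set_eqI iffI)
    fix y :: real assume "y \<in> {-1..<0}"
    then obtain \<alpha> where "p \<alpha> \<le> y" "y < q \<alpha>" using ex_piece[of y] by auto
    then show "y \<in> (\<Union>\<alpha>\<in>N. piece p q \<alpha>)"
      using \<open>y \<in> {-1..<0}\<close> unfolding N_def by (intro UN_I[of \<alpha>]) auto
  qed (use N_pieces in auto)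
  moreover have "\<not> f ` (\<Union>\<alpha>\<in>{\<alpha>. pi0 p \<alpha> \<le> card N}. piece p q \<alpha>)
      \<subseteq> (\<Union>\<alpha>\<in>{\<alpha>. pi0 p \<alpha> \<le> card N}. piece p q \<alpha>)"
    using irreducible k unfolding iet_irreducible_def by blast
  ultimately show ?thesis unfolding positions by simp
qed

context
  fixes W :: "real set"
  assumes invariant: "\<And>y. y \<in> IntI \<Longrightarrow> f y \<in> W \<longleftrightarrow> y \<in> W"
    and finite_jumps: "finite {b \<in> {-1<..<1}. left_jump W b}"
begin

lemma left_jump_image:
  assumes b: "b \<in> {-1<..<1}" "left_jump W b" and "b \<notin> range p"
  shows "f b \<in> {-1<..<1} \<and> left_jump W (f b)"
proof -
  have bI: "b \<in> IntI" using b(1) by simp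
  obtain \<epsilon> where \<epsilon>: "\<epsilon> > 0" "\<forall>z. b - \<epsilon> < z \<and> z < b \<longrightarrow> (z \<in> W \<longleftrightarrow> b \<notin> W)"
    using b(2) unfolding left_jump_def by blast
  obtain \<delta> where \<delta>: "\<delta> > 0" "\<And>z. b - \<delta> < z \<Longrightarrow> z < b + \<delta> \<Longrightarrow> z \<in> IntI \<and> f z = z + (f b - b)"
    using translation_atE[OF f_translation[OF bI assms(3)]] by blast
  define e where "e = min \<epsilon> \<delta>"
  have e: "0 < e" "e \<le> \<epsilon>" "e \<le> \<delta>" using \<epsilon>(1) \<delta>(1) unfolding e_def by auto
  have near: "z - (f b - b) \<in> IntI \<and> f (z - (f b - b)) = z" if "f b - e < z" "z < f b" for z
    using \<delta>(2)[of "z - (f b - b)"] that e by auto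
  have "f b \<noteq> -1"
  proof
    assume "f b = -1"
    then show False using near[of "-1 - e / 2"] f_maps_into e(1) by fastforce
  qed
  then have "f b \<in> {-1<..<1}" using f_maps_into[OF bI] by auto
  moreover have "z \<in> W \<longleftrightarrow> f b \<notin> W" if "f b - e < z" "z < f b" for z
    using near[OF that] invariant[of "z - (f b - b)"] invariant[OF bI] \<epsilon>(2) that e by auto
  then have "left_jump W (f b)" unfolding left_jump_def using e(1) by blast
  ultimately show ?thesis by blast
qed

lemma left_jump_preimage:
  assumes b: "b \<in> {-1<..<1}" "left_jump W b" and "b \<notin> f ` range p"
  shows "\<exists>v. v \<in> {-1<..<1} \<and> left_jump W v \<and> f v = b"
proof -
  have bI: "b \<in> IntI" using b(1) by simp
  define v where "v = finv b"
  have vI: "v \<in> IntI" and fv: "f v = b" using finv_maps_into[OF bI] f_finv[OF bI] v_def by auto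
  have "v \<notin> range p" using assms(3) fv by auto
  then have "v \<noteq> -1" using minus_one_left_endpoint by auto
  obtain \<epsilon> where \<epsilon>: "\<epsilon> > 0" "\<forall>z. b - \<epsilon> < z \<and> z < b \<longrightarrow> (z \<in> W \<longleftrightarrow> b \<notin> W)"
    using b(2) unfolding left_jump_def by blast
  obtain \<delta> where \<delta>: "\<delta> > 0" "\<And>z. v - \<delta> < z \<Longrightarrow> z < v + \<delta> \<Longrightarrow> z \<in> IntI \<and> f z = z + (f v - v)"
    using translation_atE[OF f_translation[OF vI \<open>v \<notin> range p\<close>]] by blast
  define e where "e = min \<epsilon> \<delta>"
  have e: "0 < e" "e \<le> \<epsilon>" "e \<le> \<delta>" using \<epsilon>(1) \<delta>(1) unfolding e_def by auto
  have "z \<in> W \<longleftrightarrow> v \<notin> W" if "v - e < z" "z < v" for z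
  proof -
    have "z \<in> IntI" "f z = z + (b - v)" using \<delta>(2)[of z] that e fv by auto
    then show ?thesis using invariant[of z] invariant[OF vI] \<epsilon>(2) that e fv by auto
  qed
  then have "left_jump W v" unfolding left_jump_def using e(1) by blast
  moreover have "v \<in> {-1<..<1}" using vI \<open>v \<noteq> -1\<close> by auto
  ultimately show ?thesis using fv by blast
qed

lemma left_jump_reaches_endpoint:
  assumes "b \<in> {-1<..<1}" "left_jump W b"
  obtains k where "(f^^k) b \<in> range p" "(f^^k) b \<in> {-1<..<1}" "left_jump W ((f^^k) b)"
    "\<forall>i<k. (f^^i) b \<notin> range p"
proof -
  have jumps: "(f^^i) b \<in> {-1<..<1} \<and> left_jump W ((f^^i) b)" if "\<forall>j<i. (f^^j) b \<notin> range p" for i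
    using that
  proof (induction i)
    case (Suc i)
    then show ?case using left_jump_image[of "(f^^i) b"] by simp
  qed (use assms in simp)
  show thesis
  proof (cases "\<exists>k. (f^^k) b \<in> range p")
    case True
    define k where "k = (LEAST k. (f^^k) b \<in> range p)"
    have "(f^^k) b \<in> range p" unfolding k_def using True by (rule LeastI_ex)
    moreover have "\<forall>i<k. (f^^i) b \<notin> range p" unfolding k_def using not_less_Least by blast
    ultimately show thesis using that jumps[of k] by blast
  next
    case False
    then have "range (\<lambda>i. (f^^i) b) \<subseteq> {b \<in> {-1<..<1}. left_jump W b}" using jumps by auto
    moreover have "inj (\<lambda>i. (f^^i) b)"
    proof (rule injI)
      fix i j assume "(f^^i) b = (f^^j) b"
      then show "i = j" using orbit_inj[of b i j] assms(1) by simp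
    qed
    ultimately show thesis using finite_jumps by (meson infinite_UNIV_nat inj_on_finite)
  qed
qed

lemma left_jump_reached_from_endpoint:
  assumes "b \<in> {-1<..<1}" "left_jump W b"
  shows "\<exists>m \<alpha>. 1 \<le> m \<and> (f^^m) (p \<alpha>) = b"
proof (rule ccontr)
  assume not_reached: "\<not> (\<exists>m \<alpha>. 1 \<le> m \<and> (f^^m) (p \<alpha>) = b)"
  have backward: "\<exists>y. y \<in> {-1<..<1} \<and> left_jump W y \<and> (f^^n) y = b" for n
  proof (induction n)
    case (Suc n)
    then obtain y where y: "y \<in> {-1<..<1}" "left_jump W y" "(f^^n) y = b" by blast
    have "y \<notin> f ` range p"
    proof
      assume "y \<in> f ` range p"
      then obtain \<alpha> where "f (p \<alpha>) = y" by blast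
      then have "(f^^Suc n) (p \<alpha>) = b" using y(3) by (simp only: funpow_Suc_right comp_apply)
      then show False using not_reached by force
    qed
    then obtain v where "v \<in> {-1<..<1}" "left_jump W v" "f v = y"
      using left_jump_preimage[OF y(1,2)] by blast
    moreover from this have "(f^^Suc n) v = b" using y(3) by (simp only: funpow_Suc_right comp_apply)
    ultimately show ?case by blast
  qed (use assms in auto)
  define Y where "Y n = (SOME y. y \<in> {-1<..<1} \<and> left_jump W y \<and> (f^^n) y = b)" for n
  have Y: "Y n \<in> {-1<..<1} \<and> left_jump W (Y n) \<and> (f^^n) (Y n) = b" for n
    unfolding Y_def using someI_ex[OF backward[of n]] .
  have "inj Y"
  proof (rule injI)
    fix i j assume "Y i = Y j"
    then have "(f^^i) (Y i) = (f^^j) (Y i)" using Y[of i] Y[of j] by simp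
    moreover have "Y i \<in> IntI" using Y[of i] by auto
    ultimately show "i = j" using orbit_inj by blast
  qed
  moreover have "range Y \<subseteq> {b \<in> {-1<..<1}. left_jump W b}" using Y by auto
  ultimately show False using finite_jumps by (meson infinite_UNIV_nat inj_on_finite)
qed

text \<open>A jump is reached from a left endpoint and reaches a left endpoint \<open>p \<beta>\<close> which is again a
  jump, so \<open>p \<beta> \<noteq> -1\<close> and by the Keane condition \<open>p \<beta> = 0\<close>. Its orbit meets no left endpoint
  before that, and \<open>0\<close> has a left endpoint as preimage, so the jump is \<open>0\<close> itself.\<close>

lemma left_jump_eq_zero:
  assumes "b \<in> {-1<..<1}" "left_jump W b"
  shows "b = 0"
proof -
  obtain k where k: "(f^^k) b \<in> range p" "(f^^k) b \<in> {-1<..<1}" "\<forall>i<k. (f^^i) b \<notin> range p"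
    using left_jump_reaches_endpoint[OF assms] by blast
  obtain \<beta> where \<beta>: "(f^^k) b = p \<beta>" using k(1) by blast
  obtain m \<alpha> where m: "1 \<le> m" "(f^^m) (p \<alpha>) = b"
    using left_jump_reached_from_endpoint[OF assms] by blast
  have "(f^^(k + m)) (p \<alpha>) = p \<beta>" using m(2) \<beta> by (simp add: funpow_add)
  then have "p \<beta> = -1 \<or> p \<beta> = 0" using left_endpoint_orbit[of "k + m" \<alpha> \<beta>] m(1) by simp
  then have "(f^^k) b = 0" using \<beta> k(2) by auto
  show "b = 0"
  proof (cases k)
    case (Suc k')
    obtain \<alpha>0 where "f (p \<alpha>0) = 0" by (rule zero_image_of_left_endpoint)
    then have "f ((f^^k') b) = f (p \<alpha>0)" using \<open>(f^^k) b = 0\<close> Suc by simp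
    moreover have "(f^^k') b \<in> IntI" using fwd.funpow_maps_into assms(1) by simp
    ultimately have "(f^^k') b = p \<alpha>0" using f_eqD left_endpoint_in_I by blast
    then show ?thesis using k(3) Suc by auto
  qed (use \<open>(f^^k) b = 0\<close> in simp)
qed

end

lemma invariant_Ico_Union_constant:
  assumes "finite F" and W: "W = (\<Union>(s, t)\<in>F. {s..<t})"
    and invariant: "\<And>y. y \<in> IntI \<Longrightarrow> f y \<in> W \<longleftrightarrow> y \<in> W"
    and "x \<in> IntI" "y \<in> IntI"
  shows "x \<in> W \<longleftrightarrow> y \<in> W"
proof -
  have "{b \<in> {-1<..<1}. left_jump W b} \<subseteq> fst ` F \<union> snd ` F"
    using left_jumps_Ico_Union[OF assms(1)] unfolding W by blast
  then have finite_jumps: "finite {b \<in> {-1<..<1}. left_jump W b}"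
    by (rule finite_subset) (use assms(1) in simp)
  have right_constant: "\<exists>\<epsilon>>0. \<forall>z. y \<le> z \<and> z < y + \<epsilon> \<longrightarrow> (z \<in> W \<longleftrightarrow> y \<in> W)" for y
    using Ico_Union_right_constant[OF assms(1), of y] unfolding W by metis
  have no_jump: "\<not> left_jump W b" if "b \<in> {-1<..<1}" "b \<noteq> 0" for b
    using left_jump_eq_zero[OF invariant finite_jumps] that by blast
  have "\<not> left_jump W b" if "-1 < b" "b < 0" for b using no_jump that by simp
  then have negative: "z \<in> W \<longleftrightarrow> -1 \<in> W" if "z \<in> {-1..<0}" for z
    by (rule membership_constant_without_left_jumps[OF right_constant]) (use that in auto)
  have "\<not> left_jump W b" if "0 < b" "b < 1" for b using no_jump that by simp
  then have positive: "z \<in> W \<longleftrightarrow> 0 \<in> W" if "z \<in> {0..<1}" for z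
    by (rule membership_constant_without_left_jumps[OF right_constant]) (use that in auto)
  have "-1 \<in> W \<longleftrightarrow> 0 \<in> W"
  proof (rule ccontr)
    assume differ: "\<not> (-1 \<in> W \<longleftrightarrow> 0 \<in> W)"
    have "f ` {-1..<0} \<subseteq> {-1..<0}"
    proof (rule image_subsetI, rule ccontr)
      fix z :: real assume z: "z \<in> {-1..<0}" "f z \<notin> {-1..<0}"
      then have "f z \<in> {0..<1}" using f_maps_into[of z] by auto
      then show False using differ negative[OF z(1)] positive[of "f z"] invariant[of z] z(1) by auto
    qed
    then show False using negative_half_not_invariant by blast
  qed
  then show ?thesis using negative positive assms(4,5) by (metis atLeastLessThan_iff not_le)
qed

lemma orbit_enters:
  assumes "-1 \<le> c" "c < d" "d \<le> 1" "x \<in> IntI"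
  shows "\<exists>n. (f^^n) x \<in> {c..<d}"
proof -
  obtain F where "finite F" "visitors c d = (\<Union>(s, t)\<in>F. {s..<t})"
    using visitors_Ico_Union[OF assms(1-3)] by blast
  moreover have "c \<in> visitors c d" using assms(1-3) unfolding visitors_def
    by (auto intro: exI[of _ 0])
  ultimately have "x \<in> visitors c d"
    using invariant_Ico_Union_constant[of F "visitors c d" x c] visitors_invariant[OF assms(1,3)]
      assms by auto
  then show ?thesis unfolding visitors_def by blast
qed

end

theorem proposition8p4:
  fixes f :: "real \<Rightarrow> real" and p q :: "'a::finite \<Rightarrow> real"
  assumes "is_iet f p q"
    and "iet_irreducible f p q"
    and "billiard_like f p q"
    and "modified_keane f p"
  shows "minimal_on_I f"
proof -
  interpret billiard_iet f p q
    using assms by unfold_locales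
  show ?thesis
    unfolding minimal_on_I_def
  proof (intro ballI subsetI)
    fix x y assume "x \<in> IntI" "y \<in> IntI"
    show "y \<in> closure {(f^^n) x |n. True}"
      unfolding closure_approachable
    proof (intro allI impI)
      fix e :: real assume "0 < e"
      then obtain n where "(f^^n) x \<in> {y..<min (y + e) 1}"
        using orbit_enters[of y "min (y + e) 1" x] \<open>x \<in> IntI\<close> \<open>y \<in> IntI\<close> by auto
      then have "dist ((f^^n) x) y < e" unfolding dist_real_def by auto
      then show "\<exists>s\<in>{(f^^n) x |n. True}. dist s y < e" by blast
    qed
  qed
qed

end
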